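(* Fix any $\theta=(A,B)$ with $A\in\mathbb{R}^{p\times d}$, $B\in\mathbb{R}^{d\times d}$ and let $\theta^{\star}$ be the projection of $\theta$ onto $\mathcal{S}$ in the $P$-norm, and $\Delta=\theta-\theta^{\star}$. Then: 1. The matrix $\Delta^{\top}P\theta^{\star}\Sigma$ is symmetric. 2. $K_0 \le \sigma_d^2(P^{1/2}\theta^{\star}\Sigma)$ and $\sigma_1^2(P^{1/2}\theta^{\star}\Sigma)\le K_1$, where $K_0 = 2\sigma_d(M\Sigma^{1/2})\sigma_d(\Sigma)$ and $K_1 = 2\sigma_1(M\Sigma^{1/2})\sigma_1(\Sigma)$.
   Context: $\Sigma\in\mathbb{R}^{d\times d}$ is positive definite, $M\in\mathbb{R}^{p\times d}$ with $p\ge d$ and $M\Sigma^{1/2}$ of full column rank. Let $U\Gamma V^{\top}$ be an SVD of $M\Sigma^{1/2}$ with $U\in\mathbb{R}^{p\times d}$, $V\in\mathbb{R}^{d\times d}$, $U^{\top}U=V^{\top}V=I_d$, $\Gamma$ diagonal positive definite. $\mathcal{S}=\left\{\begin{bmatrix}U\Gamma^{1/2}J^{\top}\Sigma^{-1/2}\\ \Sigma^{-1/2}V\Gamma^{1/2}J^{\top}\Sigma^{-1/2}\end{bmatrix}: J\in\mathbb{O}_d\right\}$. $P=\begin{bmatrix}I_p&0\\0&\Sigma\end{bmatrix}$, $\|\theta\|_P=\sqrt{\mathrm{Tr}(\theta^{\top}P\theta)}$. $\sigma_i$ denote ordered singular values, largest first. *)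

theory Defs
  imports "Jordan_Normal_Form.Matrix" "Jordan_Normal_Form.Char_Poly" "Jordan_Normal_Form.DL_Rank" "HOL-Library.Multiset"
begin

definition trace_mat :: "real mat \<Rightarrow> real" where
  "trace_mat A = (\<Sum>i<dim_row A. A $$ (i, i))"

definition sym_mat :: "real mat \<Rightarrow> bool" where
  "sym_mat A \<longleftrightarrow> transpose_mat A = A"

definition psd_mat :: "nat \<Rightarrow> real mat \<Rightarrow> bool" where
  "psd_mat n A \<longleftrightarrow> A \<in> carrier_mat n n \<and> sym_mat A \<and>
     (\<forall>v \<in> carrier_vec n. v \<bullet> (A *\<^sub>v v) \<ge> 0)"

definition pd_mat :: "nat \<Rightarrow> real mat \<Rightarrow> bool" where
  "pd_mat n A \<longleftrightarrow> A \<in> carrier_mat n n \<and> sym_mat A \<and>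
     (\<forall>v \<in> carrier_vec n. v \<noteq> 0\<^sub>v n \<longrightarrow> v \<bullet> (A *\<^sub>v v) > 0)"

definition mat_sqrt :: "nat \<Rightarrow> real mat \<Rightarrow> real mat" where
  "mat_sqrt n A = (THE R. psd_mat n R \<and> R * R = A)"

definition inv_mat :: "nat \<Rightarrow> real mat \<Rightarrow> real mat" where
  "inv_mat n A = (THE B. B \<in> carrier_mat n n \<and> A * B = 1\<^sub>m n \<and> B * A = 1\<^sub>m n)"

definition sing_vals :: "real mat \<Rightarrow> real list" where
  "sing_vals X = rev (sorted_list_of_multiset
      (image_mset sqrt (proots (char_poly (transpose_mat X * X)))))"

(* sigma_i(X), 1-indexed: sigma X 1 is the largest singular value *)
definition sigma :: "real mat \<Rightarrow> nat \<Rightarrow> real" where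
  "sigma X i = sing_vals X ! (i - 1)"

definition Pmat :: "nat \<Rightarrow> nat \<Rightarrow> real mat \<Rightarrow> real mat" where
  "Pmat p d Sig = four_block_mat (1\<^sub>m p) (0\<^sub>m p d) (0\<^sub>m d p) Sig"

definition Pnorm :: "real mat \<Rightarrow> real mat \<Rightarrow> real" where
  "Pnorm P th = sqrt (trace_mat (transpose_mat th * P * th))"

(* the set S, built from an SVD  U Gamma V^T  of  M Sigma^{1/2} *)
definition Sset :: "nat \<Rightarrow> real mat \<Rightarrow> real mat \<Rightarrow> real mat \<Rightarrow> real mat \<Rightarrow> real mat set" where
  "Sset d Sig U Gam V =
     (let Sm = inv_mat d (mat_sqrt d Sig); G = mat_sqrt d Gam in
      {(U * G * transpose_mat J * Sm) @\<^sub>r (Sm * V * G * transpose_mat J * Sm) | J.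
         J \<in> carrier_mat d d \<and> transpose_mat J * J = 1\<^sub>m d})"

end

theory Submission
  imports Defs
begin

text \<open>Every element of \<open>\<S>\<close> has the form \<open>C J\<^sup>T \<Sigma>\<^sup>-\<^sup>1\<^sup>/\<^sup>2\<close> with
  \<open>C = [U \<Gamma>\<^sup>1\<^sup>/\<^sup>2; \<Sigma>\<^sup>-\<^sup>1\<^sup>/\<^sup>2 V \<Gamma>\<^sup>1\<^sup>/\<^sup>2]\<close> and \<open>J\<close> orthogonal; write \<open>\<theta>\<^sup>\<star> = C N\<close> with
  \<open>N = J\<^sub>\<star>\<^sup>T \<Sigma>\<^sup>-\<^sup>1\<^sup>/\<^sup>2\<close>.

  Symmetry: composing \<open>J\<^sub>\<star>\<close> with a Givens rotation of angle \<open>t\<close> in the \<open>(i, j)\<close>-plane stays in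
  \<open>\<S>\<close>, so the squared \<open>P\<close>-distance from \<open>\<theta>\<close>, a quadratic polynomial in \<open>cos t - 1\<close> and
  \<open>sin t\<close>, is minimal at \<open>t = 0\<close>. Its derivative there is a multiple of \<open>Z\<^sub>j\<^sub>i - Z\<^sub>i\<^sub>j\<close> for
  \<open>Z = N \<Delta>\<^sup>T P C\<close>, so \<open>Z\<close> is symmetric, and \<open>\<Delta>\<^sup>T P \<theta>\<^sup>\<star> \<Sigma> = Q Z Q\<^sup>T\<close> with \<open>Q = \<Sigma>\<^sup>1\<^sup>/\<^sup>2 J\<^sub>\<star>\<close>.

  Bounds: for every \<open>w\<close>, \<open>|P\<^sup>1\<^sup>/\<^sup>2 \<theta>\<^sup>\<star> \<Sigma> w|\<^sup>2 = 2 z\<^sup>T \<Gamma> z\<close> with \<open>z = J\<^sub>\<star>\<^sup>T \<Sigma>\<^sup>1\<^sup>/\<^sup>2 w\<close> and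
  \<open>|z|\<^sup>2 = w\<^sup>T \<Sigma> w\<close>. The diagonal of \<open>\<Gamma>\<close> lies between \<open>\<sigma>\<^sub>d\<close> and \<open>\<sigma>\<^sub>1\<close> of \<open>M \<Sigma>\<^sup>1\<^sup>/\<^sup>2\<close>, and
  \<open>w\<^sup>T \<Sigma> w\<close> between \<open>\<sigma>\<^sub>d(\<Sigma>) |w|\<^sup>2\<close> and \<open>\<sigma>\<^sub>1(\<Sigma>) |w|\<^sup>2\<close>. Two-sided bounds on \<open>|X w|\<^sup>2\<close>
  are bounds on the extreme eigenvalues of \<open>X\<^sup>T X\<close>, i.e. on \<open>\<sigma>\<^sub>d(X)\<^sup>2\<close> and \<open>\<sigma>\<^sub>1(X)\<^sup>2\<close>.\<close>

lemma mat_eq_by_mult_vec: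
  fixes A B :: "'a::comm_ring_1 mat"
  assumes A: "A \<in> carrier_mat nr nc" and B: "B \<in> carrier_mat nr nc"
    and eq: "\<And>v. v \<in> carrier_vec nc \<Longrightarrow> A *\<^sub>v v = B *\<^sub>v v"
  shows "A = B"
proof (rule eq_matI)
  fix i j assume i: "i < dim_row B" and j: "j < dim_col B"
  have "(A *\<^sub>v unit_vec nc j) $ i = (B *\<^sub>v unit_vec nc j) $ i" using eq[of "unit_vec nc j"] by simp
  thus "A $$ (i, j) = B $$ (i, j)" using A B i j by (simp add: scalar_prod_right_unit row_def)
qed (use A B in auto)

lemma conjugate_real_vec [simp]: "conjugate (v :: real vec) = v"
  by (rule eq_vecI) auto

lemma scalar_prod_self_ge_0: "0 \<le> (v :: real vec) \<bullet> v"
  using conjugate_square_ge_0_vec[of v] by simp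

lemma scalar_prod_self_eq_0_iff: "(v :: real vec) \<in> carrier_vec n \<Longrightarrow> v \<bullet> v = 0 \<longleftrightarrow> v = 0\<^sub>v n"
  using conjugate_square_eq_0_vec[of v n] by simp

lemma scalar_prod_self_gt_0: "(v :: real vec) \<in> carrier_vec n \<Longrightarrow> v \<noteq> 0\<^sub>v n \<Longrightarrow> 0 < v \<bullet> v"
  using scalar_prod_self_ge_0[of v] scalar_prod_self_eq_0_iff[of v n] by linarith

text \<open>Dimension-only versions of associativity, which let the simplifier reassociate long
  products given the \<open>carrier_matD\<close> facts of the factors.\<close>

lemma assoc_mult_mat_dim:
  "dim_col A = dim_row B \<Longrightarrow> dim_col B = dim_row C \<Longrightarrow> A * B * C = A * (B * C)"
  by (rule assoc_mult_mat[of A "dim_row A" "dim_col A" B "dim_col B" C "dim_col C"]) auto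

lemma assoc_mult_mat_vec_dim:
  "dim_col A = dim_row B \<Longrightarrow> dim_col B = dim_vec v \<Longrightarrow> (A * B) *\<^sub>v v = A *\<^sub>v (B *\<^sub>v v)"
  by (rule assoc_mult_mat_vec[of A "dim_row A" "dim_col A" B "dim_col B" v]) auto

lemmas mult_mat_dim_simps = assoc_mult_mat_dim assoc_mult_mat_vec_dim

lemma scalar_prod_sym_mat:
  fixes R :: "real mat"
  assumes R: "R \<in> carrier_mat n n" and sym: "transpose_mat R = R"
    and x: "x \<in> carrier_vec n" and y: "y \<in> carrier_vec n"
  shows "(R *\<^sub>v x) \<bullet> y = x \<bullet> (R *\<^sub>v y)"
  using transpose_vec_mult_scalar[OF R y x] sym comm_scalar_prod[of "R *\<^sub>v x" n y] R x y by simp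

lemma scalar_prod_isometry:
  fixes Q :: "real mat"
  assumes Q: "Q \<in> carrier_mat m n" and orth: "transpose_mat Q * Q = 1\<^sub>m n" and x: "x \<in> carrier_vec n"
  shows "(Q *\<^sub>v x) \<bullet> (Q *\<^sub>v x) = x \<bullet> x"
proof -
  have "(Q *\<^sub>v x) \<bullet> (Q *\<^sub>v x) = (transpose_mat Q *\<^sub>v (Q *\<^sub>v x)) \<bullet> x"
    by (rule transpose_vec_mult_scalar[symmetric, OF Q x]) (use Q x in simp)
  also have "transpose_mat Q *\<^sub>v (Q *\<^sub>v x) = x"
    using Q x orth by (simp flip: assoc_mult_mat_vec)
  finally show ?thesis .
qed

lemma scalar_prod_gram:
  fixes X :: "real mat"
  assumes X: "X \<in> carrier_mat m n" and w: "w \<in> carrier_vec n"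
  shows "w \<bullet> ((transpose_mat X * X) *\<^sub>v w) = (X *\<^sub>v w) \<bullet> (X *\<^sub>v w)"
proof -
  have "w \<bullet> ((transpose_mat X * X) *\<^sub>v w) = (transpose_mat X *\<^sub>v (X *\<^sub>v w)) \<bullet> w"
    using X w by (simp add: comm_scalar_prod[of w n])
  also have "\<dots> = (X *\<^sub>v w) \<bullet> (X *\<^sub>v w)"
    by (rule transpose_vec_mult_scalar[OF X w]) (use X w in simp)
  finally show ?thesis .
qed

lemma quad_form_diagonal_mat:
  fixes D :: "real mat"
  assumes D: "D \<in> carrier_mat n n" and diag: "diagonal_mat D" and y: "y \<in> carrier_vec n"
  shows "y \<bullet> (D *\<^sub>v y) = (\<Sum>i<n. D $$ (i, i) * (y $ i)\<^sup>2)"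
proof -
  have Dy: "(D *\<^sub>v y) $ i = D $$ (i, i) * y $ i" if i: "i < n" for i
  proof -
    have "(D *\<^sub>v y) $ i = (\<Sum>j<n. D $$ (i, j) * y $ j)"
      using D y i by (simp add: scalar_prod_def row_def lessThan_atLeast0)
    also have "\<dots> = (\<Sum>j<n. if j = i then D $$ (i, i) * y $ i else 0)"
      by (rule sum.cong) (use diag D i in \<open>auto simp: diagonal_mat_def\<close>)
    finally show ?thesis using i by simp
  qed
  have "y \<bullet> (D *\<^sub>v y) = (\<Sum>i<n. y $ i * (D *\<^sub>v y) $ i)"
    using D y by (simp add: scalar_prod_def lessThan_atLeast0)
  also have "\<dots> = (\<Sum>i<n. D $$ (i, i) * (y $ i)\<^sup>2)"
    by (rule sum.cong) (simp_all add: Dy power2_eq_square)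
  finally show ?thesis .
qed

lemma quad_form_diagonal_mat_lower_bound:
  fixes D :: "real mat"
  assumes D: "D \<in> carrier_mat n n" and diag: "diagonal_mat D" and y: "y \<in> carrier_vec n"
    and bnd: "\<And>i. i < n \<Longrightarrow> a \<le> D $$ (i, i)"
  shows "a * (y \<bullet> y) \<le> y \<bullet> (D *\<^sub>v y)"
  using y unfolding quad_form_diagonal_mat[OF D diag y]
  by (simp add: scalar_prod_def power2_eq_square lessThan_atLeast0 sum_distrib_left)
    (intro sum_mono mult_right_mono, simp_all add: bnd)

lemma quad_form_diagonal_mat_upper_bound:
  fixes D :: "real mat"
  assumes D: "D \<in> carrier_mat n n" and diag: "diagonal_mat D" and y: "y \<in> carrier_vec n"
    and bnd: "\<And>i. i < n \<Longrightarrow> D $$ (i, i) \<le> b"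
  shows "y \<bullet> (D *\<^sub>v y) \<le> b * (y \<bullet> y)"
  using y unfolding quad_form_diagonal_mat[OF D diag y]
  by (simp add: scalar_prod_def power2_eq_square lessThan_atLeast0 sum_distrib_left)
    (intro sum_mono mult_right_mono, simp_all add: bnd)

section \<open>Spectral theorem for real symmetric matrices\<close>

definition householder_mat :: "nat \<Rightarrow> real vec \<Rightarrow> real mat" where
  "householder_mat n w = mat n n (\<lambda>(i, j). (if i = j then 1 else 0) - 2 / (w \<bullet> w) * w $ i * w $ j)"

lemma householder_mat_carrier: "householder_mat n w \<in> carrier_mat n n"
  by (simp add: householder_mat_def)

lemma transpose_householder_mat: "transpose_mat (householder_mat n w) = householder_mat n w"
  by (rule eq_matI) (auto simp: householder_mat_def)

lemma householder_mat_mult_vec: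
  assumes w: "w \<in> carrier_vec n" and x: "x \<in> carrier_vec n"
  shows "householder_mat n w *\<^sub>v x = x - (2 / (w \<bullet> w) * (w \<bullet> x)) \<cdot>\<^sub>v w"
proof (rule eq_vecI)
  fix i assume "i < dim_vec (x - (2 / (w \<bullet> w) * (w \<bullet> x)) \<cdot>\<^sub>v w)"
  hence i: "i < n" using w by simp
  have "(householder_mat n w *\<^sub>v x) $ i
      = (\<Sum>j<n. ((if i = j then 1 else 0) - 2 / (w \<bullet> w) * w $ i * w $ j) * x $ j)"
    using i x by (simp add: householder_mat_def scalar_prod_def lessThan_atLeast0)
  also have "\<dots> = (\<Sum>j<n. (if i = j then x $ j else 0) - 2 / (w \<bullet> w) * w $ i * (w $ j * x $ j))"
    by (rule sum.cong) (simp_all add: algebra_simps)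
  also have "\<dots> = x $ i - 2 / (w \<bullet> w) * w $ i * (\<Sum>j<n. w $ j * x $ j)"
    using i by (simp add: sum_subtractf sum_distrib_left)
  also have "(\<Sum>j<n. w $ j * x $ j) = w \<bullet> x"
    using x by (simp add: scalar_prod_def lessThan_atLeast0)
  finally show "(householder_mat n w *\<^sub>v x) $ i = (x - (2 / (w \<bullet> w) * (w \<bullet> x)) \<cdot>\<^sub>v w) $ i"
    using i x w by simp
qed (use x w in \<open>auto simp: householder_mat_def\<close>)

lemma householder_mat_involution:
  assumes w: "w \<in> carrier_vec n"
  shows "householder_mat n w * householder_mat n w = 1\<^sub>m n"
proof (rule mat_eq_by_mult_vec[OF _ one_carrier_mat])
  fix x :: "real vec" assume x: "x \<in> carrier_vec n"
  define c where "c = 2 / (w \<bullet> w)"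
  define y where "y = x - (c * (w \<bullet> x)) \<cdot>\<^sub>v w"
  have y: "y \<in> carrier_vec n" using x w by (simp add: y_def)
  have "c * (w \<bullet> y) = c * (w \<bullet> x) * (1 - c * (w \<bullet> w))"
    using x w by (simp add: y_def scalar_prod_minus_distrib algebra_simps)
  also have "\<dots> = - c * (w \<bullet> x)"
    by (cases "w \<bullet> w = 0") (auto simp: c_def)
  finally have "y - (c * (w \<bullet> y)) \<cdot>\<^sub>v w = x"
    by (intro eq_vecI) (use x w in \<open>auto simp: y_def\<close>)
  hence "householder_mat n w *\<^sub>v (householder_mat n w *\<^sub>v x) = x"
    using householder_mat_mult_vec[OF w x] householder_mat_mult_vec[OF w y]
    by (simp add: c_def y_def)
  thus "householder_mat n w * householder_mat n w *\<^sub>v x = 1\<^sub>m n *\<^sub>v x"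
    using x by (simp add: assoc_mult_mat_vec[OF householder_mat_carrier householder_mat_carrier x])
qed (rule mult_carrier_mat[OF householder_mat_carrier householder_mat_carrier])

text \<open>The reflection in the hyperplane orthogonal to \<open>u - e\<^sub>0\<close> swaps the unit vectors \<open>u\<close> and \<open>e\<^sub>0\<close>.
  If \<open>u = e\<^sub>0\<close>, the junk value \<open>2 / 0 = 0\<close> makes it the identity.\<close>

lemma householder_mat_maps_to_unit_vec:
  assumes u: "u \<in> carrier_vec n" and uu: "u \<bullet> u = 1" and n: "0 < n"
  shows "householder_mat n (u - unit_vec n 0) *\<^sub>v u = unit_vec n 0"
proof -
  define w where "w = u - unit_vec n 0"
  have w: "w \<in> carrier_vec n" using u by (simp add: w_def)
  have wu: "w \<bullet> u = 1 - u $ 0" and ww: "w \<bullet> w = 2 - 2 * u $ 0"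
    unfolding w_def using u n uu
    by (simp_all add: minus_scalar_prod_distrib[of _ n] scalar_prod_minus_distrib[of _ n]
        comm_scalar_prod[of "unit_vec n 0" n u])
  have "u - (2 / (w \<bullet> w) * (w \<bullet> u)) \<cdot>\<^sub>v w = unit_vec n 0"
  proof (cases "u $ 0 = 1")
    case True
    hence "w = 0\<^sub>v n" using ww scalar_prod_self_eq_0_iff[OF w] by simp
    have "u $ i = unit_vec n 0 $ i" if "i < n" for i
      using arg_cong[OF \<open>w = 0\<^sub>v n\<close>, of "\<lambda>v. v $ i"] that u by (simp add: w_def)
    hence "u = unit_vec n 0" using u by (intro eq_vecI) auto
    thus ?thesis using \<open>w = 0\<^sub>v n\<close> by (intro eq_vecI) auto
  next
    case False
    hence "2 / (w \<bullet> w) * (w \<bullet> u) = 1" unfolding wu ww by (simp add: field_simps)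
    thus ?thesis using u by (intro eq_vecI) (auto simp: w_def)
  qed
  thus ?thesis using householder_mat_mult_vec[OF w u] by (simp add: w_def)
qed

lemma mem_proots_char_poly_iff:
  fixes A :: "real mat"
  assumes A: "A \<in> carrier_mat n n"
  shows "r \<in># proots (char_poly A) \<longleftrightarrow> (\<exists>v. v \<in> carrier_vec n \<and> v \<noteq> 0\<^sub>v n \<and> A *\<^sub>v v = r \<cdot>\<^sub>v v)"
proof -
  have "char_poly A \<noteq> 0" using degree_monic_char_poly[OF A] by (metis coeff_0 zero_neq_one)
  hence "r \<in># proots (char_poly A) \<longleftrightarrow> eigenvalue A r" using eigenvalue_root_char_poly[OF A] by simp
  thus ?thesis using A unfolding eigenvalue_def eigenvector_def by auto
qed

text \<open>The Hermitian form \<open>v\<^sup>* A v\<close> is real and equals \<open>a v\<^sup>* v\<close> with \<open>v\<^sup>* v > 0\<close>.\<close>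

lemma complex_eigenvalue_of_sym_mat_is_real:
  fixes A :: "real mat"
  assumes A: "A \<in> carrier_mat n n" and sym: "transpose_mat A = A"
    and v: "v \<in> carrier_vec n" "v \<noteq> 0\<^sub>v n"
    and ev: "map_mat complex_of_real A *\<^sub>v v = a \<cdot>\<^sub>v v"
  shows "cnj a = a"
proof -
  have Aij: "A $$ (i, j) = A $$ (j, i)" if "i < n" "j < n" for i j
    using arg_cong[OF sym, of "\<lambda>B. B $$ (j, i)"] A that by simp
  have row: "(\<Sum>j<n. of_real (A $$ (i, j)) * v $ j) = a * v $ i" if i: "i < n" for i
    using arg_cong[OF ev, of "\<lambda>x. x $ i"] i A v by (simp add: scalar_prod_def row_def lessThan_atLeast0)
  define s where "s = (\<Sum>i<n. cnj (v $ i) * (\<Sum>j<n. of_real (A $$ (i, j)) * v $ j))"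
  define r where "r = (\<Sum>i<n. cnj (v $ i) * v $ i)"
  have "s = (\<Sum>i<n. cnj (v $ i) * (a * v $ i))"
    unfolding s_def by (intro sum.cong) (simp_all add: row)
  hence "s = a * r" by (simp add: r_def sum_distrib_left algebra_simps)
  moreover have "cnj s = s"
  proof -
    have "cnj s = (\<Sum>i<n. \<Sum>j<n. v $ i * of_real (A $$ (i, j)) * cnj (v $ j))"
      unfolding s_def by (simp add: sum_distrib_left algebra_simps)
    also have "\<dots> = (\<Sum>j<n. \<Sum>i<n. v $ i * of_real (A $$ (i, j)) * cnj (v $ j))"
      by (rule sum.swap)
    also have "\<dots> = s"
      unfolding s_def sum_distrib_left by (intro sum.cong refl) (auto simp: Aij algebra_simps)
    finally show ?thesis .
  qed
  moreover have "r \<noteq> 0" "cnj r = r"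
  proof -
    define R where "R = (\<Sum>i<n. (cmod (v $ i))\<^sup>2)"
    have rR: "r = of_real R"
      unfolding r_def R_def by (simp add: complex_mult_cnj cmod_def power2_eq_square mult.commute)
    obtain i where i: "i < n" "v $ i \<noteq> 0"
      using v by (metis eq_vecI carrier_vecD index_zero_vec)
    have "(cmod (v $ i))\<^sup>2 \<le> R"
      unfolding R_def by (rule member_le_sum) (use i in auto)
    moreover have "(cmod (v $ i))\<^sup>2 > 0" using i by simp
    ultimately show "r \<noteq> 0" "cnj r = r" unfolding rR by auto
  qed
  ultimately have "cnj a * r = a * r" "r \<noteq> 0" by (metis complex_cnj_mult, simp)
  thus ?thesis by simp
qed

lemma sym_mat_has_unit_eigenvector:
  fixes A :: "real mat"
  assumes A: "A \<in> carrier_mat n n" and sym: "transpose_mat A = A" and n: "0 < n"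
  shows "\<exists>lam u. u \<in> carrier_vec n \<and> u \<bullet> u = 1 \<and> A *\<^sub>v u = lam \<cdot>\<^sub>v u"
proof -
  define Ac where "Ac = map_mat complex_of_real A"
  have Ac: "Ac \<in> carrier_mat n n" using A by (simp add: Ac_def)
  obtain as where cp: "char_poly Ac = (\<Prod>a\<leftarrow>as. [:- a, 1:])" and len: "length as = n"
    using char_poly_factorized[OF Ac] by blast
  have "poly (char_poly Ac) (as ! 0) = 0"
    unfolding cp using len n by (auto simp: poly_prod_list_zero_iff)
  then obtain vc where "eigenvector Ac vc (as ! 0)"
    using eigenvalue_root_char_poly[OF Ac] unfolding eigenvalue_def by blast
  hence "cnj (as ! 0) = as ! 0"
    using complex_eigenvalue_of_sym_mat_is_real[OF A sym] Ac unfolding eigenvector_def Ac_def by blast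
  hence real: "as ! 0 = of_real (Re (as ! 0))" by (metis Reals_cnj_iff complex_is_Real_iff of_real_Re)
  have "of_real (poly (char_poly A) (Re (as ! 0))) = poly (char_poly Ac) (as ! 0)"
    unfolding Ac_def of_real_hom.char_poly_hom[OF A] by (subst real) (simp only: of_real_hom.poly_map_poly)
  hence "poly (char_poly A) (Re (as ! 0)) = 0" using \<open>poly (char_poly Ac) (as ! 0) = 0\<close> by simp
  then obtain v where v: "v \<in> carrier_vec n" "v \<noteq> 0\<^sub>v n" "A *\<^sub>v v = Re (as ! 0) \<cdot>\<^sub>v v"
    using eigenvalue_root_char_poly[OF A] A unfolding eigenvalue_def eigenvector_def by auto
  define u where "u = (1 / sqrt (v \<bullet> v)) \<cdot>\<^sub>v v"
  have "u \<bullet> u = 1"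
    using v scalar_prod_self_gt_0[OF v(1,2)] by (simp add: u_def power2_eq_square[symmetric])
  moreover have "A *\<^sub>v u = Re (as ! 0) \<cdot>\<^sub>v u"
    using v A by (simp add: u_def mult_mat_vec smult_smult_assoc mult.commute)
  ultimately show ?thesis using v by (auto simp: u_def)
qed

lemma sym_mat_block_of_unit_eigenvector:
  fixes A :: "real mat"
  assumes A: "A \<in> carrier_mat (Suc m) (Suc m)" and sym: "transpose_mat A = A"
    and ev: "A *\<^sub>v unit_vec (Suc m) 0 = lam \<cdot>\<^sub>v unit_vec (Suc m) 0"
  defines "A' \<equiv> mat m m (\<lambda>(i, j). A $$ (Suc i, Suc j))"
  shows "A = four_block_mat (mat 1 1 (\<lambda>_. lam)) (0\<^sub>m 1 m) (0\<^sub>m m 1) A'"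
    and "transpose_mat A' = A'"
proof -
  have Aij: "A $$ (i, j) = A $$ (j, i)" if "i < Suc m" "j < Suc m" for i j
    using arg_cong[OF sym, of "\<lambda>B. B $$ (j, i)"] A that by simp
  have col0: "A $$ (i, 0) = (if i = 0 then lam else 0)" if i: "i < Suc m" for i
    using arg_cong[OF ev, of "\<lambda>x. x $ i"] i A by (simp add: row_def)
  show "A = four_block_mat (mat 1 1 (\<lambda>_. lam)) (0\<^sub>m 1 m) (0\<^sub>m m 1) A'"
  proof (rule eq_matI)
    fix i j assume "i < dim_row (four_block_mat (mat 1 1 (\<lambda>_. lam)) (0\<^sub>m 1 m) (0\<^sub>m m 1) A')"
      "j < dim_col (four_block_mat (mat 1 1 (\<lambda>_. lam)) (0\<^sub>m 1 m) (0\<^sub>m m 1) A')"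
    hence i: "i < Suc m" and j: "j < Suc m" by (auto simp: A'_def)
    show "A $$ (i, j) = four_block_mat (mat 1 1 (\<lambda>_. lam)) (0\<^sub>m 1 m) (0\<^sub>m m 1) A' $$ (i, j)"
    proof (cases "i = 0 \<or> j = 0")
      case True
      thus ?thesis using col0[OF i] col0[OF j] Aij[OF i j] i j by (auto simp: A'_def)
    next
      case False
      then obtain i' j' where "i = Suc i'" "j = Suc j'" by (metis not0_implies_Suc)
      thus ?thesis using i j by (simp add: A'_def)
    qed
  qed (use A in \<open>auto simp: A'_def\<close>)
  show "transpose_mat A' = A'"
    unfolding A'_def by (rule eq_matI) (auto simp: Aij)
qed

lemma block_diag_orthogonal_conj:
  fixes W D :: "real mat"
  assumes W: "W \<in> carrier_mat m m" and D: "D \<in> carrier_mat m m"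
    and orth: "transpose_mat W * W = 1\<^sub>m m" and diag: "diagonal_mat D"
    and W'_def: "W' = four_block_mat (1\<^sub>m 1) (0\<^sub>m 1 m) (0\<^sub>m m 1) W"
    and D'_def: "D' = four_block_mat (mat 1 1 (\<lambda>_. lam)) (0\<^sub>m 1 m) (0\<^sub>m m 1) D"
  shows "W' \<in> carrier_mat (Suc m) (Suc m)" "D' \<in> carrier_mat (Suc m) (Suc m)"
    "transpose_mat W' * W' = 1\<^sub>m (Suc m)" "diagonal_mat D'"
    "W' * D' * transpose_mat W'
       = four_block_mat (mat 1 1 (\<lambda>_. lam)) (0\<^sub>m 1 m) (0\<^sub>m m 1) (W * D * transpose_mat W)"
proof -
  have tW': "transpose_mat W' = four_block_mat (1\<^sub>m 1) (0\<^sub>m 1 m) (0\<^sub>m m 1) (transpose_mat W)"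
    unfolding W'_def using W by (subst transpose_four_block_mat) auto
  show "W' \<in> carrier_mat (Suc m) (Suc m)" "D' \<in> carrier_mat (Suc m) (Suc m)"
    using W D by (auto simp: W'_def D'_def)
  show "transpose_mat W' * W' = 1\<^sub>m (Suc m)"
    unfolding tW' unfolding W'_def using W orth by (subst mult_four_block_mat[of _ 1 1 _ m _ m]) auto
  show "diagonal_mat D'"
    using diag D unfolding D'_def diagonal_mat_def by auto
  have WD: "W' * D' = four_block_mat (mat 1 1 (\<lambda>_. lam)) (0\<^sub>m 1 m) (0\<^sub>m m 1) (W * D)"
    unfolding W'_def D'_def using W D by (subst mult_four_block_mat[of _ 1 1 _ m _ m]) auto
  show "W' * D' * transpose_mat W'
      = four_block_mat (mat 1 1 (\<lambda>_. lam)) (0\<^sub>m 1 m) (0\<^sub>m m 1) (W * D * transpose_mat W)"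
    unfolding tW' WD using W D by (subst mult_four_block_mat[of _ 1 1 _ m _ m]) auto
qed

lemma sym_mat_householder_deflation:
  fixes A :: "real mat"
  assumes A: "A \<in> carrier_mat (Suc m) (Suc m)" and sym: "transpose_mat A = A"
  shows "\<exists>H lam A'. H \<in> carrier_mat (Suc m) (Suc m) \<and> transpose_mat H = H \<and> H * H = 1\<^sub>m (Suc m)
    \<and> A' \<in> carrier_mat m m \<and> transpose_mat A' = A'
    \<and> H * A * H = four_block_mat (mat 1 1 (\<lambda>_. lam)) (0\<^sub>m 1 m) (0\<^sub>m m 1) A'"
proof -
  let ?e = "unit_vec (Suc m) 0"
  obtain lam u where u: "u \<in> carrier_vec (Suc m)" "u \<bullet> u = 1" "A *\<^sub>v u = lam \<cdot>\<^sub>v u"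
    using sym_mat_has_unit_eigenvector[OF A sym] by blast
  define H where "H = householder_mat (Suc m) (u - ?e)"
  have H: "H \<in> carrier_mat (Suc m) (Suc m)" "transpose_mat H = H" "H * H = 1\<^sub>m (Suc m)"
    unfolding H_def using u
    by (auto simp: householder_mat_carrier transpose_householder_mat householder_mat_involution)
  have Hu: "H *\<^sub>v u = ?e"
    unfolding H_def using householder_mat_maps_to_unit_vec[OF u(1,2)] by simp
  have He: "H *\<^sub>v ?e = u"
    using arg_cong[OF Hu, of "(*\<^sub>v) H"] H u by (simp flip: assoc_mult_mat_vec)
  have HAH: "H * A * H \<in> carrier_mat (Suc m) (Suc m)" using H A by simp
  have sym': "transpose_mat (H * A * H) = H * A * H"
    using H A sym by (simp add: transpose_mult[of _ "Suc m" "Suc m" _ "Suc m"])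
  have ev: "(H * A * H) *\<^sub>v ?e = lam \<cdot>\<^sub>v ?e"
    using H A u He Hu by (simp add: assoc_mult_mat_vec[of _ "Suc m" "Suc m" _ "Suc m"] mult_mat_vec)
  define A' where "A' = mat m m (\<lambda>(i, j). (H * A * H) $$ (Suc i, Suc j))"
  have "H * A * H = four_block_mat (mat 1 1 (\<lambda>_. lam)) (0\<^sub>m 1 m) (0\<^sub>m m 1) A'"
    "transpose_mat A' = A'"
    using sym_mat_block_of_unit_eigenvector[OF HAH sym' ev] unfolding A'_def by blast+
  moreover have "A' \<in> carrier_mat m m" by (simp add: A'_def)
  ultimately show ?thesis using H by blast
qed

theorem sym_mat_spectral_decomposition:
  fixes A :: "real mat"
  assumes "A \<in> carrier_mat n n" "transpose_mat A = A"
  shows "\<exists>W D. W \<in> carrier_mat n n \<and> D \<in> carrier_mat n n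
     \<and> transpose_mat W * W = 1\<^sub>m n \<and> W * transpose_mat W = 1\<^sub>m n
     \<and> diagonal_mat D \<and> A = W * D * transpose_mat W"
  using assms
proof (induction n arbitrary: A)
  case 0
  thus ?case by (intro exI[of _ "1\<^sub>m 0"] exI[of _ A]) (auto simp: diagonal_mat_def)
next
  case (Suc m A)
  obtain H lam A' where H: "H \<in> carrier_mat (Suc m) (Suc m)" "transpose_mat H = H" "H * H = 1\<^sub>m (Suc m)"
    and A': "A' \<in> carrier_mat m m" "transpose_mat A' = A'"
    and HAH: "H * A * H = four_block_mat (mat 1 1 (\<lambda>_. lam)) (0\<^sub>m 1 m) (0\<^sub>m m 1) A'"
    using sym_mat_householder_deflation[OF Suc.prems] by blast
  obtain W' D' where W': "W' \<in> carrier_mat m m" "D' \<in> carrier_mat m m"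
    "transpose_mat W' * W' = 1\<^sub>m m" "diagonal_mat D'" "A' = W' * D' * transpose_mat W'"
    using Suc.IH[OF A'] by blast
  define B where "B = four_block_mat (1\<^sub>m 1) (0\<^sub>m 1 m) (0\<^sub>m m 1) W'"
  define D where "D = four_block_mat (mat 1 1 (\<lambda>_. lam)) (0\<^sub>m 1 m) (0\<^sub>m m 1) D'"
  note BD = block_diag_orthogonal_conj[OF W'(1-4) B_def D_def, folded W'(5), folded HAH]
  define W where "W = H * B"
  have W: "W \<in> carrier_mat (Suc m) (Suc m)" using H BD by (simp add: W_def)
  have tW: "transpose_mat W = transpose_mat B * H"
    unfolding W_def using H BD by (simp add: transpose_mult)
  note dims = carrier_matD[OF H(1)] carrier_matD[OF BD(1)] carrier_matD[OF BD(2)]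
    carrier_matD[OF Suc.prems(1)]
  have "W * D * transpose_mat W = H * (B * D * transpose_mat B) * H"
    unfolding tW unfolding W_def using dims by (simp add: mult_mat_dim_simps)
  also have "\<dots> = (H * H) * A * (H * H)"
    unfolding BD(5) using dims by (simp add: mult_mat_dim_simps)
  also have "\<dots> = A" using H Suc.prems by simp
  finally have "A = W * D * transpose_mat W" ..
  moreover have WtW: "transpose_mat W * W = 1\<^sub>m (Suc m)"
  proof -
    have "transpose_mat W * W = transpose_mat B * (H * H) * B"
      unfolding tW unfolding W_def using dims by (simp add: mult_mat_dim_simps)
    thus ?thesis using H BD by simp
  qed
  moreover have "W * transpose_mat W = 1\<^sub>m (Suc m)"
    using mat_mult_left_right_inverse[OF _ W WtW] W by simp
  ultimately show ?case using W BD by blast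
qed

lemma proots_prod_linear_factors: "proots (\<Prod>a\<leftarrow>xs. [:- (a::real), 1:]) = mset xs"
proof (induction xs)
  case (Cons a xs)
  have "(\<Prod>a\<leftarrow>xs. [:- (a::real), 1:]) \<noteq> 0" by (auto simp: prod_list_zero_iff)
  hence "proots (\<Prod>a\<leftarrow>a # xs. [:- a, 1:]) = proots [:- a, 1:] + proots (\<Prod>a\<leftarrow>xs. [:- a, 1:])"
    unfolding list.map prod_list.Cons by (intro proots_mult) auto
  also have "proots [:- a, 1:] = {#a#}" using proots_linear_factor[of "-a"] by simp
  finally show ?case using Cons by simp
qed simp

lemma size_proots_char_poly_sym_mat:
  fixes A :: "real mat"
  assumes A: "A \<in> carrier_mat n n" and sym: "transpose_mat A = A"
  shows "size (proots (char_poly A)) = n"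
proof -
  obtain W D where W: "W \<in> carrier_mat n n" "D \<in> carrier_mat n n" "transpose_mat W * W = 1\<^sub>m n"
    "W * transpose_mat W = 1\<^sub>m n" "diagonal_mat D" "A = W * D * transpose_mat W"
    using sym_mat_spectral_decomposition[OF A sym] by blast
  have "similar_mat A D"
    by (rule similar_matI[of A D W "transpose_mat W" n]) (use A W in auto)
  hence "char_poly A = char_poly D" by (rule char_poly_similar)
  also have "\<dots> = (\<Prod>a\<leftarrow>diag_mat D. [:- a, 1:])"
    by (rule char_poly_upper_triangular) (use W in \<open>auto simp: diagonal_mat_def upper_triangular_def\<close>)
  finally have "proots (char_poly A) = mset (diag_mat D)"
    by (simp only: proots_prod_linear_factors)
  thus ?thesis using W(2) by (simp add: diag_mat_def)
qed

lemma diagonal_mat_mult_unit_vec: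
  fixes D :: "real mat"
  assumes D: "D \<in> carrier_mat n n" and diag: "diagonal_mat D" and i: "i < n"
  shows "D *\<^sub>v unit_vec n i = D $$ (i, i) \<cdot>\<^sub>v unit_vec n i"
  by (rule eq_vecI) (use D diag i in \<open>auto simp: diagonal_mat_def row_def\<close>)

lemma orthogonal_mat_mult_unit_vec_nonzero:
  fixes W :: "real mat"
  assumes W: "W \<in> carrier_mat m n" and orth: "transpose_mat W * W = 1\<^sub>m n" and i: "i < n"
  shows "W *\<^sub>v unit_vec n i \<noteq> 0\<^sub>v m"
proof
  assume "W *\<^sub>v unit_vec n i = 0\<^sub>v m"
  hence "transpose_mat W *\<^sub>v (W *\<^sub>v unit_vec n i) = 0\<^sub>v n"
    using W by (intro eq_vecI) auto
  moreover have "transpose_mat W *\<^sub>v (W *\<^sub>v unit_vec n i) = unit_vec n i"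
    using W orth by (simp flip: assoc_mult_mat_vec)
  ultimately show False using i unit_vec_nonzero[of i n] by auto
qed

lemma orthogonal_conj_eigenvector:
  fixes A W D :: "real mat"
  assumes W: "W \<in> carrier_mat n n" and D: "D \<in> carrier_mat n n"
    and orth: "transpose_mat W * W = 1\<^sub>m n" and diag: "diagonal_mat D"
    and A: "A = W * D * transpose_mat W" and i: "i < n"
  shows "A *\<^sub>v (W *\<^sub>v unit_vec n i) = D $$ (i, i) \<cdot>\<^sub>v (W *\<^sub>v unit_vec n i)"
proof -
  have cancel: "transpose_mat W *\<^sub>v (W *\<^sub>v unit_vec n i) = unit_vec n i"
    using W orth by (simp flip: assoc_mult_mat_vec)
  have "A *\<^sub>v (W *\<^sub>v unit_vec n i) = W *\<^sub>v (D *\<^sub>v (transpose_mat W *\<^sub>v (W *\<^sub>v unit_vec n i)))"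
    unfolding A using carrier_matD[OF W] carrier_matD[OF D] by (simp add: mult_mat_dim_simps)
  also have "\<dots> = D $$ (i, i) \<cdot>\<^sub>v (W *\<^sub>v unit_vec n i)"
    unfolding cancel diagonal_mat_mult_unit_vec[OF D diag i] using W by (simp add: mult_mat_vec)
  finally show ?thesis .
qed

lemma quad_form_orthogonal_conj:
  fixes A W D :: "real mat"
  assumes W: "W \<in> carrier_mat n n" and D: "D \<in> carrier_mat n n"
    and A: "A = W * D * transpose_mat W" and x: "x \<in> carrier_vec n"
  shows "x \<bullet> (A *\<^sub>v x) = (transpose_mat W *\<^sub>v x) \<bullet> (D *\<^sub>v (transpose_mat W *\<^sub>v x))"
proof -
  have "x \<bullet> (A *\<^sub>v x) = x \<bullet> (W *\<^sub>v (D *\<^sub>v (transpose_mat W *\<^sub>v x)))"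
    unfolding A using carrier_matD[OF W] carrier_matD[OF D] carrier_vecD[OF x]
    by (simp add: mult_mat_dim_simps)
  also have "\<dots> = (transpose_mat W *\<^sub>v x) \<bullet> (D *\<^sub>v (transpose_mat W *\<^sub>v x))"
    by (rule transpose_vec_mult_scalar[symmetric, OF W _ x]) (use W D x in auto)
  finally show ?thesis .
qed

lemma psd_mat_eigenvalue_nonneg:
  assumes psd: "psd_mat n A" and v: "v \<in> carrier_vec n" "v \<noteq> 0\<^sub>v n" "A *\<^sub>v v = lam \<cdot>\<^sub>v v"
  shows "0 \<le> lam"
proof -
  have "0 \<le> v \<bullet> (A *\<^sub>v v)" using psd v unfolding psd_mat_def by blast
  also have "v \<bullet> (A *\<^sub>v v) = lam * (v \<bullet> v)" using v by simp
  finally show ?thesis using scalar_prod_self_gt_0[OF v(1,2)] by (simp add: zero_le_mult_iff)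
qed

section \<open>Square roots of positive semidefinite matrices\<close>

lemma diagonal_mat_sqrt:
  fixes D :: "real mat"
  assumes D: "D \<in> carrier_mat n n" and diag: "diagonal_mat D"
    and nonneg: "\<And>i. i < n \<Longrightarrow> 0 \<le> D $$ (i, i)"
  defines "E \<equiv> mat n n (\<lambda>(i, j). if i = j then sqrt (D $$ (i, i)) else 0)"
  shows "E \<in> carrier_mat n n" "diagonal_mat E" "transpose_mat E = E" "E * E = D"
proof -
  show E: "E \<in> carrier_mat n n" "diagonal_mat E" "transpose_mat E = E"
    unfolding E_def diagonal_mat_def by auto
  show "E * E = D"
  proof (rule eq_matI)
    fix i j assume "i < dim_row D" "j < dim_col D"
    hence i: "i < n" and j: "j < n" using D by auto
    have "(E * E) $$ (i, j) = (\<Sum>k<n. E $$ (i, k) * E $$ (k, j))"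
      using E i j by (simp add: scalar_prod_def lessThan_atLeast0)
    also have "\<dots> = (\<Sum>k<n. if k = i then (if i = j then D $$ (i, i) else 0) else 0)"
      by (rule sum.cong) (auto simp: E_def i j nonneg)
    finally show "(E * E) $$ (i, j) = D $$ (i, j)" using i j diag D by (auto simp: diagonal_mat_def)
  qed (use E D in auto)
qed

lemma psd_mat_sqrt_exists:
  assumes psd: "psd_mat n A"
  shows "\<exists>R. psd_mat n R \<and> R * R = A"
proof -
  have A: "A \<in> carrier_mat n n" "transpose_mat A = A"
    using psd unfolding psd_mat_def sym_mat_def by auto
  obtain W D where W: "W \<in> carrier_mat n n" and D: "D \<in> carrier_mat n n"
    and orth: "transpose_mat W * W = 1\<^sub>m n" "W * transpose_mat W = 1\<^sub>m n"
    and diag: "diagonal_mat D" and A_eq: "A = W * D * transpose_mat W"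
    using sym_mat_spectral_decomposition[OF A] by blast
  have D_nonneg: "0 \<le> D $$ (i, i)" if i: "i < n" for i
    using psd_mat_eigenvalue_nonneg[OF psd _ orthogonal_mat_mult_unit_vec_nonzero[OF W orth(1) i]
        orthogonal_conj_eigenvector[OF W D orth(1) diag A_eq i]] W by simp
  define E where "E = mat n n (\<lambda>(i, j). if i = j then sqrt (D $$ (i, i)) else 0)"
  note E = diagonal_mat_sqrt[OF D diag D_nonneg, folded E_def]
  define R where "R = W * E * transpose_mat W"
  have "R * R = W * E * (transpose_mat W * W) * E * transpose_mat W"
    unfolding R_def using carrier_matD[OF W] carrier_matD[OF E(1)] by (simp add: mult_mat_dim_simps)
  also have "\<dots> = W * (E * E) * transpose_mat W"
    unfolding orth(1) using carrier_matD[OF W] carrier_matD[OF E(1)] by (simp add: mult_mat_dim_simps)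
  finally have "R * R = W * (E * E) * transpose_mat W" .
  hence "R * R = A" using E(4) A_eq by simp
  moreover have "transpose_mat R = R"
    unfolding R_def using W E by (simp add: transpose_mult[of _ n n _ n] transpose_mult[of W n n E n])
  moreover have "0 \<le> v \<bullet> (R *\<^sub>v v)" if v: "v \<in> carrier_vec n" for v
  proof -
    have "0 * ((transpose_mat W *\<^sub>v v) \<bullet> (transpose_mat W *\<^sub>v v))
        \<le> (transpose_mat W *\<^sub>v v) \<bullet> (E *\<^sub>v (transpose_mat W *\<^sub>v v))"
      by (rule quad_form_diagonal_mat_lower_bound[OF E(1,2)]) (use W v in \<open>auto simp: E_def D_nonneg\<close>)
    thus ?thesis using quad_form_orthogonal_conj[OF W E(1) R_def v] by simp
  qed
  moreover have "R \<in> carrier_mat n n" using W E by (simp add: R_def)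
  ultimately show ?thesis unfolding psd_mat_def sym_mat_def by blast
qed

text \<open>With \<open>a = R q\<close> and \<open>b = S q\<close> one has \<open>|a|\<^sup>2 = |b|\<^sup>2\<close>, so
  \<open>\<lambda> (q\<cdot>a + q\<cdot>b) = (a - b)\<cdot>(a + b) = 0\<close>; both summands are nonnegative, hence
  \<open>\<lambda> |q|\<^sup>2 = q\<cdot>a - q\<cdot>b = 0\<close>.\<close>

lemma psd_sqrt_difference_eigenvalue_zero:
  fixes R S :: "real mat"
  assumes R: "psd_mat n R" and S: "psd_mat n S" and RS: "R * R = S * S"
    and q: "q \<in> carrier_vec n" "q \<noteq> 0\<^sub>v n" and ev: "(R - S) *\<^sub>v q = lam \<cdot>\<^sub>v q"
  shows "lam = 0"
proof (rule ccontr)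
  assume lam: "lam \<noteq> 0"
  have Rc: "R \<in> carrier_mat n n" "transpose_mat R = R" and Sc: "S \<in> carrier_mat n n" "transpose_mat S = S"
    using R S unfolding psd_mat_def sym_mat_def by auto
  define a where "a = R *\<^sub>v q"
  define b where "b = S *\<^sub>v q"
  have a: "a \<in> carrier_vec n" and b: "b \<in> carrier_vec n" using Rc Sc q by (auto simp: a_def b_def)
  have lq: "lam \<cdot>\<^sub>v q = a - b"
    unfolding a_def b_def ev[symmetric] using Rc Sc q by (simp add: minus_mult_distrib_mat_vec)
  have "a \<bullet> a = q \<bullet> ((R * R) *\<^sub>v q)"
    unfolding a_def using scalar_prod_sym_mat[OF Rc q(1), of "R *\<^sub>v q"] Rc q by simp
  also have "\<dots> = b \<bullet> b"
    unfolding RS b_def using scalar_prod_sym_mat[OF Sc q(1), of "S *\<^sub>v q"] Sc q by simp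
  finally have ab: "a \<bullet> a = b \<bullet> b" .
  have "lam * (q \<bullet> a + q \<bullet> b) = (a - b) \<bullet> a + (a - b) \<bullet> b"
    unfolding lq[symmetric] using q a b by (simp add: distrib_left)
  also have "\<dots> = 0"
    using a b ab comm_scalar_prod[OF a b] by (simp add: minus_scalar_prod_distrib[of _ n])
  finally have "q \<bullet> a + q \<bullet> b = 0" using lam by simp
  moreover have "q \<bullet> a \<ge> 0" "q \<bullet> b \<ge> 0"
    using R S q unfolding a_def b_def psd_mat_def by auto
  ultimately have "q \<bullet> a = 0" "q \<bullet> b = 0" by linarith+
  hence "lam * (q \<bullet> q) = 0"
    using arg_cong[OF lq, of "\<lambda>x. q \<bullet> x"] q a b by (simp add: scalar_prod_minus_distrib[of _ n])
  thus False using lam scalar_prod_self_gt_0[OF q] by simp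
qed

lemma psd_mat_sqrt_unique:
  fixes R S :: "real mat"
  assumes R: "psd_mat n R" and S: "psd_mat n S" and RS: "R * R = S * S"
  shows "R = S"
proof -
  have Rc: "R \<in> carrier_mat n n" "transpose_mat R = R" and Sc: "S \<in> carrier_mat n n" "transpose_mat S = S"
    using R S unfolding psd_mat_def sym_mat_def by auto
  have M: "R - S \<in> carrier_mat n n" "transpose_mat (R - S) = R - S"
    using Rc Sc by (auto simp: transpose_minus)
  obtain Q L where Q: "Q \<in> carrier_mat n n" and L: "L \<in> carrier_mat n n"
    and orth: "transpose_mat Q * Q = 1\<^sub>m n" and diag: "diagonal_mat L"
    and M_eq: "R - S = Q * L * transpose_mat Q"
    using sym_mat_spectral_decomposition[OF M] by blast
  have "L $$ (i, i) = 0" if i: "i < n" for i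
    using psd_sqrt_difference_eigenvalue_zero[OF R S RS _ orthogonal_mat_mult_unit_vec_nonzero[OF Q orth i]
        orthogonal_conj_eigenvector[OF Q L orth diag M_eq i]] Q by simp
  hence "L = 0\<^sub>m n n" using L diag unfolding diagonal_mat_def by (intro eq_matI) auto
  hence "R - S = 0\<^sub>m n n" unfolding M_eq using Q by simp
  thus "R = S" using Rc Sc by (intro eq_matI) (auto simp: mat_eq_iff)
qed

lemma mat_sqrt_psd:
  assumes "psd_mat n A"
  shows "psd_mat n (mat_sqrt n A)" and "mat_sqrt n A * mat_sqrt n A = A"
proof -
  obtain R where R: "psd_mat n R" "R * R = A" using psd_mat_sqrt_exists[OF assms] by blast
  have "mat_sqrt n A = R"
    unfolding mat_sqrt_def by (rule the_equality) (use R psd_mat_sqrt_unique in auto)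
  thus "psd_mat n (mat_sqrt n A)" "mat_sqrt n A * mat_sqrt n A = A" using R by auto
qed

section \<open>Extreme singular values\<close>

lemma gram_eigenvalue_nonneg:
  fixes X :: "real mat"
  assumes X: "X \<in> carrier_mat m n"
    and v: "v \<in> carrier_vec n" "v \<noteq> 0\<^sub>v n" "(transpose_mat X * X) *\<^sub>v v = r \<cdot>\<^sub>v v"
  shows "0 \<le> r"
proof -
  have "r * (v \<bullet> v) = (X *\<^sub>v v) \<bullet> (X *\<^sub>v v)"
    using scalar_prod_gram[OF X v(1)] v by simp
  hence "0 \<le> r * (v \<bullet> v)" using scalar_prod_self_ge_0[of "X *\<^sub>v v"] by simp
  thus ?thesis using scalar_prod_self_gt_0[OF v(1,2)] by (simp add: zero_le_mult_iff)
qed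

text \<open>The characteristic polynomial of the symmetric matrix \<open>X\<^sup>T X\<close> has \<open>n\<close> real roots, so the last
  and first entries of \<open>sing_vals X\<close> come from its least and greatest eigenvalue.\<close>

lemma sigma_extremal_gram_eigenvalues:
  fixes X :: "real mat"
  assumes X: "X \<in> carrier_mat m n" and n: "0 < n"
  shows "\<exists>v r. v \<in> carrier_vec n \<and> v \<noteq> 0\<^sub>v n \<and> (transpose_mat X * X) *\<^sub>v v = r \<cdot>\<^sub>v v
           \<and> sigma X n = sqrt r"
    and "\<exists>v r. v \<in> carrier_vec n \<and> v \<noteq> 0\<^sub>v n \<and> (transpose_mat X * X) *\<^sub>v v = r \<cdot>\<^sub>v v
           \<and> sigma X 1 = sqrt r"
    and "v \<in> carrier_vec n \<Longrightarrow> v \<noteq> 0\<^sub>v n \<Longrightarrow> (transpose_mat X * X) *\<^sub>v v = r \<cdot>\<^sub>v v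
           \<Longrightarrow> sigma X n \<le> sqrt r \<and> sqrt r \<le> sigma X 1"
proof -
  define R where "R = proots (char_poly (transpose_mat X * X))"
  have G: "transpose_mat X * X \<in> carrier_mat n n" "transpose_mat (transpose_mat X * X) = transpose_mat X * X"
    using X by (auto simp: transpose_mult[of _ n m _ n])
  note root_iff = mem_proots_char_poly_iff[OF G(1), folded R_def]
  define xs where "xs = sorted_list_of_multiset (image_mset sqrt R)"
  have len: "length xs = n"
    using size_proots_char_poly_sym_mat[OF G] unfolding xs_def R_def
    by (metis size_mset mset_sorted_list_of_multiset size_image_mset)
  have sorted: "sorted xs" unfolding xs_def by simp
  have set_xs: "set xs = sqrt ` set_mset R"
    unfolding xs_def by (metis set_image_mset set_mset_mset mset_sorted_list_of_multiset)
  have sigma_n: "sigma X n = xs ! 0" and sigma_1: "sigma X 1 = xs ! (n - 1)"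
    unfolding sigma_def sing_vals_def R_def[symmetric] xs_def[symmetric] using len n by (simp_all add: rev_nth)
  have "xs ! 0 \<in> set xs" "xs ! (n - 1) \<in> set xs" using len n by simp_all
  thus "\<exists>v r. v \<in> carrier_vec n \<and> v \<noteq> 0\<^sub>v n \<and> (transpose_mat X * X) *\<^sub>v v = r \<cdot>\<^sub>v v
           \<and> sigma X n = sqrt r"
    and "\<exists>v r. v \<in> carrier_vec n \<and> v \<noteq> 0\<^sub>v n \<and> (transpose_mat X * X) *\<^sub>v v = r \<cdot>\<^sub>v v
           \<and> sigma X 1 = sqrt r"
    unfolding set_xs sigma_n sigma_1 using root_iff by blast+
  assume v: "v \<in> carrier_vec n" "v \<noteq> 0\<^sub>v n" "(transpose_mat X * X) *\<^sub>v v = r \<cdot>\<^sub>v v"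
  hence "sqrt r \<in> set xs" unfolding set_xs using root_iff by blast
  then obtain k where k: "k < n" "xs ! k = sqrt r" using len by (metis in_set_conv_nth)
  show "sigma X n \<le> sqrt r \<and> sqrt r \<le> sigma X 1"
    unfolding sigma_n sigma_1 k(2)[symmetric]
    using sorted_nth_mono[OF sorted, of 0 k] sorted_nth_mono[OF sorted, of k "n - 1"] k len by auto
qed

lemma sigma_sq_lower_bound:
  fixes X :: "real mat"
  assumes X: "X \<in> carrier_mat m n" and n: "0 < n"
    and bnd: "\<And>w. w \<in> carrier_vec n \<Longrightarrow> a * (w \<bullet> w) \<le> (X *\<^sub>v w) \<bullet> (X *\<^sub>v w)"
  shows "a \<le> (sigma X n)\<^sup>2"
proof -
  obtain v r where v: "v \<in> carrier_vec n" "v \<noteq> 0\<^sub>v n" "(transpose_mat X * X) *\<^sub>v v = r \<cdot>\<^sub>v v"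
    and sigma: "sigma X n = sqrt r"
    using sigma_extremal_gram_eigenvalues(1)[OF X n] by blast
  have "a * (v \<bullet> v) \<le> r * (v \<bullet> v)"
    using bnd[OF v(1)] scalar_prod_gram[OF X v(1)] v by simp
  thus ?thesis
    using scalar_prod_self_gt_0[OF v(1,2)] gram_eigenvalue_nonneg[OF X v] sigma by simp
qed

lemma sigma_sq_upper_bound:
  fixes X :: "real mat"
  assumes X: "X \<in> carrier_mat m n" and n: "0 < n"
    and bnd: "\<And>w. w \<in> carrier_vec n \<Longrightarrow> (X *\<^sub>v w) \<bullet> (X *\<^sub>v w) \<le> b * (w \<bullet> w)"
  shows "(sigma X 1)\<^sup>2 \<le> b"
proof -
  obtain v r where v: "v \<in> carrier_vec n" "v \<noteq> 0\<^sub>v n" "(transpose_mat X * X) *\<^sub>v v = r \<cdot>\<^sub>v v"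
    and sigma: "sigma X 1 = sqrt r"
    using sigma_extremal_gram_eigenvalues(2)[OF X n] by blast
  have "r * (v \<bullet> v) \<le> b * (v \<bullet> v)"
    using bnd[OF v(1)] scalar_prod_gram[OF X v(1)] v by simp
  thus ?thesis
    using scalar_prod_self_gt_0[OF v(1,2)] gram_eigenvalue_nonneg[OF X v] sigma by simp
qed

lemma sigma_bounds_sym_mat_eigenvalue:
  fixes A :: "real mat"
  assumes A: "A \<in> carrier_mat n n" and sym: "transpose_mat A = A" and n: "0 < n"
    and v: "v \<in> carrier_vec n" "v \<noteq> 0\<^sub>v n" "A *\<^sub>v v = lam \<cdot>\<^sub>v v"
  shows "sigma A n \<le> \<bar>lam\<bar> \<and> \<bar>lam\<bar> \<le> sigma A 1"
proof -
  have "(transpose_mat A * A) *\<^sub>v v = (lam * lam) \<cdot>\<^sub>v v"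
    using A v sym by (simp add: mult_mat_vec smult_smult_assoc)
  from sigma_extremal_gram_eigenvalues(3)[OF A n v(1,2) this] show ?thesis by simp
qed

lemma psd_quad_form_sigma_bounds:
  fixes A :: "real mat"
  assumes psd: "psd_mat n A" and n: "0 < n" and w: "w \<in> carrier_vec n"
  shows "sigma A n * (w \<bullet> w) \<le> w \<bullet> (A *\<^sub>v w)" and "w \<bullet> (A *\<^sub>v w) \<le> sigma A 1 * (w \<bullet> w)"
proof -
  have A: "A \<in> carrier_mat n n" "transpose_mat A = A"
    using psd unfolding psd_mat_def sym_mat_def by auto
  obtain W D where W: "W \<in> carrier_mat n n" and D: "D \<in> carrier_mat n n"
    and orth: "transpose_mat W * W = 1\<^sub>m n" "W * transpose_mat W = 1\<^sub>m n"
    and diag: "diagonal_mat D" and A_eq: "A = W * D * transpose_mat W"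
    using sym_mat_spectral_decomposition[OF A] by blast
  have D_bnd: "sigma A n \<le> D $$ (i, i) \<and> D $$ (i, i) \<le> sigma A 1" if i: "i < n" for i
  proof -
    note ev = orthogonal_mat_mult_unit_vec_nonzero[OF W orth(1) i]
      orthogonal_conj_eigenvector[OF W D orth(1) diag A_eq i]
    have "0 \<le> D $$ (i, i)" using psd_mat_eigenvalue_nonneg[OF psd _ ev] W by simp
    thus ?thesis using sigma_bounds_sym_mat_eigenvalue[OF A n _ ev] W by simp
  qed
  define y where "y = transpose_mat W *\<^sub>v w"
  have y: "y \<in> carrier_vec n" using W w by (simp add: y_def)
  have quad: "w \<bullet> (A *\<^sub>v w) = y \<bullet> (D *\<^sub>v y)"
    unfolding y_def by (rule quad_form_orthogonal_conj[OF W D A_eq w])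
  have norm: "y \<bullet> y = w \<bullet> w"
    unfolding y_def by (rule scalar_prod_isometry) (use W w orth in auto)
  show "sigma A n * (w \<bullet> w) \<le> w \<bullet> (A *\<^sub>v w)"
    unfolding quad norm[symmetric] by (rule quad_form_diagonal_mat_lower_bound[OF D diag y]) (use D_bnd in auto)
  show "w \<bullet> (A *\<^sub>v w) \<le> sigma A 1 * (w \<bullet> w)"
    unfolding quad norm[symmetric] by (rule quad_form_diagonal_mat_upper_bound[OF D diag y]) (use D_bnd in auto)
qed

lemma sigma_bounds_svd_diagonal:
  fixes X U G V :: "real mat"
  assumes U: "U \<in> carrier_mat m n" and G: "G \<in> carrier_mat n n" and V: "V \<in> carrier_mat n n"
    and U_orth: "transpose_mat U * U = 1\<^sub>m n" and V_orth: "transpose_mat V * V = 1\<^sub>m n"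
    and diag: "diagonal_mat G" and X: "X = U * G * transpose_mat V"
    and k: "k < n" and G_nonneg: "0 \<le> G $$ (k, k)"
  shows "sigma X n \<le> G $$ (k, k) \<and> G $$ (k, k) \<le> sigma X 1"
proof -
  let ?e = "unit_vec n k"
  have X_c: "X \<in> carrier_mat m n" using U G V X by simp
  have Ge: "G *\<^sub>v ?e = G $$ (k, k) \<cdot>\<^sub>v ?e" by (rule diagonal_mat_mult_unit_vec[OF G diag k])
  have Gte: "transpose_mat G *\<^sub>v ?e = G $$ (k, k) \<cdot>\<^sub>v ?e"
    using diagonal_mat_mult_unit_vec[of "transpose_mat G" n k] G diag k
    by (auto simp: diagonal_mat_def)
  have "(transpose_mat X * X) *\<^sub>v (V *\<^sub>v ?e)
      = V *\<^sub>v (transpose_mat G *\<^sub>v ((transpose_mat U * U) *\<^sub>v (G *\<^sub>v ((transpose_mat V * V) *\<^sub>v ?e))))"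
    unfolding X using U G V
    by (simp add: transpose_mult[of _ m n _ n] transpose_mult[of U m n G n]
        transpose_mult[of G n n "transpose_mat V" n] mult_mat_dim_simps)
  also have "\<dots> = (G $$ (k, k) * G $$ (k, k)) \<cdot>\<^sub>v (V *\<^sub>v ?e)"
    unfolding U_orth V_orth using Ge Gte V G by (simp add: mult_mat_vec smult_smult_assoc)
  finally have ev: "(transpose_mat X * X) *\<^sub>v (V *\<^sub>v ?e) = (G $$ (k, k) * G $$ (k, k)) \<cdot>\<^sub>v (V *\<^sub>v ?e)" .
  have "0 < n" "V *\<^sub>v ?e \<in> carrier_vec n" using k V by simp_all
  from sigma_extremal_gram_eigenvalues(3)[OF X_c this orthogonal_mat_mult_unit_vec_nonzero[OF V V_orth k] ev]
  have "sigma X n \<le> sqrt (G $$ (k, k) * G $$ (k, k)) \<and> sqrt (G $$ (k, k) * G $$ (k, k)) \<le> sigma X 1" .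
  thus ?thesis using G_nonneg by simp
qed

lemma sigma_nonneg:
  fixes X :: "real mat"
  assumes X: "X \<in> carrier_mat m n" and n: "0 < n"
  shows "0 \<le> sigma X n" and "0 \<le> sigma X 1"
  using sigma_extremal_gram_eigenvalues(1,2)[OF X n] gram_eigenvalue_nonneg[OF X] by force+

section \<open>Stationarity under orthogonal rotations\<close>

definition trace_form :: "real mat \<Rightarrow> real mat \<Rightarrow> real mat \<Rightarrow> real" where
  "trace_form P X Y = trace_mat (transpose_mat X * P * Y)"

lemma Pnorm_eq_sqrt_trace_form: "Pnorm P X = sqrt (trace_form P X X)"
  by (simp add: Pnorm_def trace_form_def)

lemma trace_mat_mult_sum:
  fixes X Y :: "real mat"
  assumes X: "X \<in> carrier_mat n m" and Y: "Y \<in> carrier_mat m n"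
  shows "trace_mat (X * Y) = (\<Sum>k<n. \<Sum>l<m. X $$ (k, l) * Y $$ (l, k))"
  unfolding trace_mat_def using X Y by (simp add: scalar_prod_def lessThan_atLeast0)

lemma trace_mat_mult_comm:
  fixes X Y :: "real mat"
  assumes X: "X \<in> carrier_mat n m" and Y: "Y \<in> carrier_mat m n"
  shows "trace_mat (X * Y) = trace_mat (Y * X)"
  unfolding trace_mat_mult_sum[OF X Y] trace_mat_mult_sum[OF Y X]
  by (subst sum.swap) (simp add: mult.commute)

lemma trace_form_sum:
  assumes X: "X \<in> carrier_mat m d" and Y: "Y \<in> carrier_mat m d" and P: "P \<in> carrier_mat m m"
  shows "trace_form P X Y = (\<Sum>b<d. \<Sum>a<m. \<Sum>c<m. X $$ (a, b) * P $$ (a, c) * Y $$ (c, b))"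
proof -
  have "trace_form P X Y = (\<Sum>b<d. \<Sum>a<m. X $$ (a, b) * (\<Sum>c<m. P $$ (a, c) * Y $$ (c, b)))"
    unfolding trace_form_def trace_mat_def using X P Y
    by (intro sum.cong) (auto simp: scalar_prod_def lessThan_atLeast0)
  thus ?thesis by (simp add: sum_distrib_left mult.assoc)
qed

lemma trace_form_sym:
  assumes X: "X \<in> carrier_mat m d" and Y: "Y \<in> carrier_mat m d"
    and P: "P \<in> carrier_mat m m" and P_sym: "transpose_mat P = P"
  shows "trace_form P X Y = trace_form P Y X"
proof -
  have Pac: "P $$ (a, c) = P $$ (c, a)" if "a < m" "c < m" for a c
    using arg_cong[OF P_sym, of "\<lambda>B. B $$ (c, a)"] P that by simp
  show ?thesis
    unfolding trace_form_sum[OF X Y P] trace_form_sum[OF Y X P]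
  proof (rule sum.cong[OF refl])
    fix b
    have "(\<Sum>a<m. \<Sum>c<m. X $$ (a, b) * P $$ (a, c) * Y $$ (c, b))
        = (\<Sum>c<m. \<Sum>a<m. X $$ (a, b) * P $$ (a, c) * Y $$ (c, b))"
      by (rule sum.swap)
    also have "\<dots> = (\<Sum>c<m. \<Sum>a<m. Y $$ (c, b) * P $$ (c, a) * X $$ (a, b))"
      by (intro sum.cong refl) (simp add: Pac)
    finally show "(\<Sum>a<m. \<Sum>c<m. X $$ (a, b) * P $$ (a, c) * Y $$ (c, b))
        = (\<Sum>a<m. \<Sum>c<m. Y $$ (a, b) * P $$ (a, c) * X $$ (c, b))" .
  qed
qed

lemma trace_form_quadratic_expansion:
  assumes X: "X \<in> carrier_mat m d" and Y: "Y \<in> carrier_mat m d" and Z: "Z \<in> carrier_mat m d"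
    and P: "P \<in> carrier_mat m m" and P_sym: "transpose_mat P = P"
  shows "trace_form P (X - u \<cdot>\<^sub>m Y - v \<cdot>\<^sub>m Z) (X - u \<cdot>\<^sub>m Y - v \<cdot>\<^sub>m Z)
    = trace_form P X X - 2 * u * trace_form P X Y - 2 * v * trace_form P X Z + u\<^sup>2 * trace_form P Y Y
      + 2 * u * v * trace_form P Y Z + v\<^sup>2 * trace_form P Z Z"
proof -
  let ?W = "X - u \<cdot>\<^sub>m Y - v \<cdot>\<^sub>m Z"
  let ?t = "\<lambda>A B. trace_form P A B"
  have W: "?W \<in> carrier_mat m d" using X Y Z by (simp add: minus_carrier_mat)
  have "?t ?W ?W = ?t X X - u * ?t X Y - u * ?t Y X - v * ?t X Z - v * ?t Z X
      + u\<^sup>2 * ?t Y Y + u * v * ?t Y Z + u * v * ?t Z Y + v\<^sup>2 * ?t Z Z"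
    unfolding trace_form_sum[OF W W P] trace_form_sum[OF X X P] trace_form_sum[OF X Y P]
      trace_form_sum[OF Y X P] trace_form_sum[OF X Z P] trace_form_sum[OF Z X P]
      trace_form_sum[OF Y Y P] trace_form_sum[OF Y Z P] trace_form_sum[OF Z Y P] trace_form_sum[OF Z Z P]
    using X Y Z
    by (simp add: sum_subtractf sum.distrib sum_distrib_left power2_eq_square algebra_simps
        flip: sum.distrib sum_subtractf)
  thus ?thesis
    using trace_form_sym[OF X Y P P_sym] trace_form_sym[OF X Z P P_sym] trace_form_sym[OF Y Z P P_sym]
    by (simp add: algebra_simps)
qed

definition plane_proj_mat :: "nat \<Rightarrow> nat \<Rightarrow> nat \<Rightarrow> real mat" where
  "plane_proj_mat d i j = mat d d (\<lambda>(k, l). if k = l \<and> (k = i \<or> k = j) then 1 else 0)"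

definition plane_skew_mat :: "nat \<Rightarrow> nat \<Rightarrow> nat \<Rightarrow> real mat" where
  "plane_skew_mat d i j = mat d d (\<lambda>(k, l). (if k = i \<and> l = j then 1 else 0) - (if k = j \<and> l = i then 1 else 0))"

definition givens_mat :: "nat \<Rightarrow> nat \<Rightarrow> nat \<Rightarrow> real \<Rightarrow> real mat" where
  "givens_mat d i j t = 1\<^sub>m d + (cos t - 1) \<cdot>\<^sub>m plane_proj_mat d i j + sin t \<cdot>\<^sub>m plane_skew_mat d i j"

lemma plane_mats_carrier [simp]:
  "plane_proj_mat d i j \<in> carrier_mat d d" "plane_skew_mat d i j \<in> carrier_mat d d"
  "givens_mat d i j t \<in> carrier_mat d d"
  by (simp_all add: plane_proj_mat_def plane_skew_mat_def givens_mat_def)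

lemma transpose_givens_mat: "transpose_mat (givens_mat d i j t) = givens_mat d i j (- t)"
  by (rule eq_matI) (auto simp: givens_mat_def plane_proj_mat_def plane_skew_mat_def)

lemma sum_delta_mult:
  assumes "finite A"
  shows "(\<Sum>l\<in>A. (if l = a then c else 0) * f l) = (if a \<in> A then c * f a else (0 :: real))"
proof -
  have "(\<Sum>l\<in>A. (if l = a then c else 0) * f l) = (\<Sum>l\<in>A. if l = a then c * f a else 0)"
    by (rule sum.cong) auto
  thus ?thesis using assms by simp
qed

lemma givens_mat_index:
  assumes "k < d" "l < d"
  shows "givens_mat d i j t $$ (k, l) = (if l = k then (if k = i \<or> k = j then cos t else 1) else 0)
    + (if l = j then (if k = i then sin t else 0) else 0) - (if l = i then (if k = j then sin t else 0) else 0)"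
  using assms by (auto simp: givens_mat_def plane_proj_mat_def plane_skew_mat_def)

lemma givens_mat_mult_vec:
  assumes ij: "i < d" "j < d" "i \<noteq> j" and x: "x \<in> carrier_vec d" and k: "k < d"
  shows "(givens_mat d i j t *\<^sub>v x) $ k = (if k = i then cos t * x $ i + sin t * x $ j
      else if k = j then cos t * x $ j - sin t * x $ i else x $ k)"
proof -
  have "(givens_mat d i j t *\<^sub>v x) $ k = (\<Sum>l<d. givens_mat d i j t $$ (k, l) * x $ l)"
    using x k carrier_matD[OF plane_mats_carrier(3)[of d i j t]]
    by (simp add: scalar_prod_def row_def lessThan_atLeast0)
  also have "\<dots> = (\<Sum>l<d. (if l = k then (if k = i \<or> k = j then cos t else 1) else 0) * x $ l)
      + (\<Sum>l<d. (if l = j then (if k = i then sin t else 0) else 0) * x $ l)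
      - (\<Sum>l<d. (if l = i then (if k = j then sin t else 0) else 0) * x $ l)"
    unfolding sum_subtractf[symmetric] sum.distrib[symmetric]
    by (rule sum.cong) (simp_all add: givens_mat_index k algebra_simps)
  also have "\<dots> = (if k = i then cos t * x $ i + sin t * x $ j
      else if k = j then cos t * x $ j - sin t * x $ i else x $ k)"
    using ij k by (cases "k = i"; cases "k = j") (simp_all add: sum_delta_mult)
  finally show ?thesis .
qed

lemma givens_mat_orthogonal:
  assumes ij: "i < d" "j < d" "i \<noteq> j"
  shows "givens_mat d i j t * transpose_mat (givens_mat d i j t) = 1\<^sub>m d"
proof (rule mat_eq_by_mult_vec[of _ d d])
  fix x :: "real vec" assume x: "x \<in> carrier_vec d"
  have y: "givens_mat d i j (- t) *\<^sub>v x \<in> carrier_vec d"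
    by (rule mult_mat_vec_carrier[OF plane_mats_carrier(3) x])
  have cs: "cos t * (cos t * y) + sin t * (sin t * y) = y" for y
  proof -
    have "cos t * (cos t * y) + sin t * (sin t * y) = (cos t * cos t + sin t * sin t) * y"
      by (simp only: algebra_simps)
    also have "cos t * cos t + sin t * sin t = 1"
      using sin_cos_squared_add[of t] by (simp add: power2_eq_square)
    finally show ?thesis by simp
  qed
  have "givens_mat d i j t *\<^sub>v (givens_mat d i j (- t) *\<^sub>v x) = x"
  proof (rule eq_vecI)
    fix k assume "k < dim_vec x"
    hence k: "k < d" using x by simp
    have "cos t * (cos t * x $ i - sin t * x $ j) + sin t * (cos t * x $ j + sin t * x $ i) = x $ i"
      "cos t * (cos t * x $ j + sin t * x $ i) - sin t * (cos t * x $ i - sin t * x $ j) = x $ j"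
      using cs[of "x $ i"] cs[of "x $ j"] by (simp_all add: algebra_simps)
    thus "(givens_mat d i j t *\<^sub>v (givens_mat d i j (- t) *\<^sub>v x)) $ k = x $ k"
      unfolding givens_mat_mult_vec[OF ij y k] using givens_mat_mult_vec[OF ij x] ij k by auto
  qed (use x carrier_matD[OF plane_mats_carrier(3)] in simp)
  thus "givens_mat d i j t * transpose_mat (givens_mat d i j t) *\<^sub>v x = 1\<^sub>m d *\<^sub>v x"
    unfolding transpose_givens_mat using x
    by (simp add: assoc_mult_mat_vec[OF plane_mats_carrier(3) plane_mats_carrier(3) x])
qed (simp_all add: transpose_givens_mat mult_carrier_mat[OF plane_mats_carrier(3) plane_mats_carrier(3)])

lemma trace_mult_plane_skew_mat:
  fixes Z :: "real mat"
  assumes Z: "Z \<in> carrier_mat d d" and i: "i < d" and j: "j < d"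
  shows "trace_mat (Z * plane_skew_mat d i j) = Z $$ (j, i) - Z $$ (i, j)"
proof -
  have "trace_mat (Z * plane_skew_mat d i j)
      = (\<Sum>k<d. \<Sum>l<d. (if l = i then (if k = j then Z $$ (k, l) else 0) else 0)
                      - (if l = j then (if k = i then Z $$ (k, l) else 0) else 0))"
    unfolding trace_mat_mult_sum[OF Z plane_mats_carrier(2)]
    by (intro sum.cong refl) (auto simp: plane_skew_mat_def right_diff_distrib)
  also have "\<dots> = Z $$ (j, i) - Z $$ (i, j)"
    using i j by (simp add: sum_subtractf)
  finally show ?thesis .
qed

lemma givens_perturbation:
  fixes C N T :: "real mat"
  assumes C: "C \<in> carrier_mat m d" and N: "N \<in> carrier_mat d d" and T: "T \<in> carrier_mat m d"
  shows "T - C * (givens_mat d i j t * N) = (T - C * N)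
    - (cos t - 1) \<cdot>\<^sub>m (C * (plane_proj_mat d i j * N)) - sin t \<cdot>\<^sub>m (C * (plane_skew_mat d i j * N))"
proof -
  let ?F = "plane_proj_mat d i j" and ?K = "plane_skew_mat d i j"
  have FN: "?F * N \<in> carrier_mat d d" and KN: "?K * N \<in> carrier_mat d d"
    using N by (meson mult_carrier_mat plane_mats_carrier)+
  have "givens_mat d i j t * N = N + (cos t - 1) \<cdot>\<^sub>m (?F * N) + sin t \<cdot>\<^sub>m (?K * N)"
    unfolding givens_mat_def using N
    by (simp add: add_mult_distrib_mat[of _ d d _ _ d] mult_smult_assoc_mat[of _ d d _ d])
  also have "C * \<dots> = C * (N + (cos t - 1) \<cdot>\<^sub>m (?F * N)) + C * (sin t \<cdot>\<^sub>m (?K * N))"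
    by (rule mult_add_distrib_mat[OF C, where nc = d]) (use N FN KN in simp_all)
  also have "C * (N + (cos t - 1) \<cdot>\<^sub>m (?F * N)) = C * N + C * ((cos t - 1) \<cdot>\<^sub>m (?F * N))"
    by (rule mult_add_distrib_mat[OF C N]) (use FN in simp)
  finally have "C * (givens_mat d i j t * N)
      = C * N + (cos t - 1) \<cdot>\<^sub>m (C * (?F * N)) + sin t \<cdot>\<^sub>m (C * (?K * N))"
    by (simp add: mult_smult_distrib[OF C FN] mult_smult_distrib[OF C KN])
  thus ?thesis using C N T by (intro eq_matI) auto
qed

text \<open>The function vanishes at the minimum \<open>t = 0\<close>, where its derivative is \<open>b\<close>.\<close>

lemma nonneg_trig_quadratic_sin_coeff:
  fixes a b q1 q2 q3 :: real
  assumes nonneg: "\<And>t. 0 \<le> a * (cos t - 1) + b * sin t + q1 * (cos t - 1)\<^sup>2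
      + q2 * ((cos t - 1) * sin t) + q3 * (sin t)\<^sup>2"
  shows "b = 0"
proof -
  define f where "f t = a * (cos t - 1) + b * sin t + q1 * (cos t - 1)\<^sup>2
      + q2 * ((cos t - 1) * sin t) + q3 * (sin t)\<^sup>2" for t :: real
  have "(f has_real_derivative b) (at 0)"
    unfolding f_def by (rule derivative_eq_intros refl | simp)+
  thus ?thesis by (rule DERIV_local_min[of _ _ _ 1]) (use nonneg in \<open>auto simp: f_def\<close>)
qed

lemma trace_form_plane_skew:
  fixes C N P D :: "real mat"
  assumes C: "C \<in> carrier_mat m d" and N: "N \<in> carrier_mat d d" and P: "P \<in> carrier_mat m m"
    and D: "D \<in> carrier_mat m d" and i: "i < d" and j: "j < d"
  defines "Z \<equiv> N * transpose_mat D * P * C"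
  shows "trace_form P D (C * (plane_skew_mat d i j * N)) = Z $$ (j, i) - Z $$ (i, j)"
proof -
  let ?K = "plane_skew_mat d i j"
  note dims = carrier_matD[OF D] carrier_matD[OF P] carrier_matD[OF C] carrier_matD[OF N]
    carrier_matD[OF plane_mats_carrier(2)]
  have Z: "Z \<in> carrier_mat d d"
    unfolding Z_def using N D P C by (meson mult_carrier_mat transpose_carrier_mat)
  have "transpose_mat D * P * (C * (?K * N)) = (transpose_mat D * P * C * ?K) * N"
    using dims by (simp add: mult_mat_dim_simps)
  also have "trace_mat \<dots> = trace_mat (N * (transpose_mat D * P * C * ?K))"
    by (rule trace_mat_mult_comm[OF _ N])
      (use D P C in \<open>meson mult_carrier_mat transpose_carrier_mat plane_mats_carrier\<close>)
  also have "N * (transpose_mat D * P * C * ?K) = Z * ?K"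
    unfolding Z_def using dims by (simp add: mult_mat_dim_simps)
  finally show ?thesis unfolding trace_form_def trace_mult_plane_skew_mat[OF Z i j] .
qed

lemma orthogonal_stationarity_skew:
  fixes C N P T :: "real mat"
  assumes C: "C \<in> carrier_mat m d" and N: "N \<in> carrier_mat d d" and P: "P \<in> carrier_mat m m"
    and P_sym: "transpose_mat P = P" and T: "T \<in> carrier_mat m d"
    and min: "\<And>R. R \<in> carrier_mat d d \<Longrightarrow> R * transpose_mat R = 1\<^sub>m d \<Longrightarrow>
      trace_form P (T - C * N) (T - C * N) \<le> trace_form P (T - C * (R * N)) (T - C * (R * N))"
    and ij: "i < d" "j < d" "i \<noteq> j"
  shows "trace_form P (T - C * N) (C * (plane_skew_mat d i j * N)) = 0"
proof -
  define D where "D = T - C * N"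
  define E1 where "E1 = C * (plane_proj_mat d i j * N)"
  define E2 where "E2 = C * (plane_skew_mat d i j * N)"
  have D: "D \<in> carrier_mat m d" using T C N by (simp add: D_def minus_carrier_mat)
  have E: "E1 \<in> carrier_mat m d" "E2 \<in> carrier_mat m d"
    unfolding E1_def E2_def using C N by (meson mult_carrier_mat plane_mats_carrier)+
  have "0 \<le> (- 2 * trace_form P D E1) * (cos t - 1) + (- 2 * trace_form P D E2) * sin t
      + trace_form P E1 E1 * (cos t - 1)\<^sup>2 + (2 * trace_form P E1 E2) * ((cos t - 1) * sin t)
      + trace_form P E2 E2 * (sin t)\<^sup>2" for t
  proof -
    have "trace_form P D D \<le> trace_form P D D - 2 * (cos t - 1) * trace_form P D E1
        - 2 * sin t * trace_form P D E2 + (cos t - 1)\<^sup>2 * trace_form P E1 E1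
        + 2 * (cos t - 1) * sin t * trace_form P E1 E2 + (sin t)\<^sup>2 * trace_form P E2 E2"
      using min[OF plane_mats_carrier(3) givens_mat_orthogonal[OF ij], of t]
      unfolding givens_perturbation[OF C N T] D_def[symmetric] E1_def[symmetric] E2_def[symmetric]
        trace_form_quadratic_expansion[OF D E P P_sym] .
    thus ?thesis by (simp add: algebra_simps)
  qed
  hence "- 2 * trace_form P D E2 = 0" by (rule nonneg_trig_quadratic_sin_coeff)
  thus ?thesis by (simp add: D_def E2_def)
qed

theorem orthogonal_stationarity_sym:
  fixes C N P T :: "real mat"
  assumes C: "C \<in> carrier_mat m d" and N: "N \<in> carrier_mat d d" and P: "P \<in> carrier_mat m m"
    and P_sym: "transpose_mat P = P" and T: "T \<in> carrier_mat m d"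
    and min: "\<And>R. R \<in> carrier_mat d d \<Longrightarrow> R * transpose_mat R = 1\<^sub>m d \<Longrightarrow>
      trace_form P (T - C * N) (T - C * N) \<le> trace_form P (T - C * (R * N)) (T - C * (R * N))"
  shows "transpose_mat (N * transpose_mat (T - C * N) * P * C) = N * transpose_mat (T - C * N) * P * C"
proof -
  define Z where "Z = N * transpose_mat (T - C * N) * P * C"
  have D: "T - C * N \<in> carrier_mat m d" using T C N by (simp add: minus_carrier_mat)
  have Z: "Z \<in> carrier_mat d d"
    unfolding Z_def using N D P C by (meson mult_carrier_mat transpose_carrier_mat)
  have "Z $$ (i, j) = Z $$ (j, i)" if "i < d" "j < d" for i j
    using orthogonal_stationarity_skew[OF C N P P_sym T min that] trace_form_plane_skew[OF C N P D that]
    by (cases "i = j") (auto simp: Z_def)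
  hence "transpose_mat Z = Z" using Z by (intro eq_matI) auto
  thus ?thesis unfolding Z_def .
qed

lemma psd_if_pd_mat:
  assumes pd: "pd_mat n A"
  shows "psd_mat n A"
proof -
  have "0 \<le> v \<bullet> (A *\<^sub>v v)" if v: "v \<in> carrier_vec n" for v
  proof (cases "v = 0\<^sub>v n")
    case True
    have "A \<in> carrier_mat n n" using pd unfolding pd_mat_def by simp
    thus ?thesis using True by simp
  next
    case False
    thus ?thesis using pd v unfolding pd_mat_def by (simp add: less_imp_le)
  qed
  thus ?thesis using pd unfolding pd_mat_def psd_mat_def by simp
qed

lemma inv_mat_eqI:
  fixes A B :: "real mat"
  assumes A: "A \<in> carrier_mat n n" and B: "B \<in> carrier_mat n n"
    and AB: "A * B = 1\<^sub>m n" and BA: "B * A = 1\<^sub>m n"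
  shows "inv_mat n A = B"
  unfolding inv_mat_def
proof (rule the_equality)
  fix X assume X: "X \<in> carrier_mat n n \<and> A * X = 1\<^sub>m n \<and> X * A = 1\<^sub>m n"
  have "X = (B * A) * X" using X BA by (simp add: left_mult_one_mat[of X n n])
  also have "\<dots> = B * (A * X)" using A B X by (simp add: assoc_mult_mat[of _ n n _ n _ n])
  finally show "X = B" using X B by simp
qed (use B AB BA in simp)

lemma pd_mat_sqrt_inverse:
  fixes A :: "real mat"
  assumes pd: "pd_mat n A"
  defines "S \<equiv> mat_sqrt n A"
  shows "inv_mat n S \<in> carrier_mat n n" "S * inv_mat n S = 1\<^sub>m n" "inv_mat n S * S = 1\<^sub>m n"
    "transpose_mat (inv_mat n S) = inv_mat n S"
proof -
  have psd_S: "psd_mat n S" and SS: "S * S = A"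
    using mat_sqrt_psd[OF psd_if_pd_mat[OF pd]] unfolding S_def by auto
  have S: "S \<in> carrier_mat n n" "transpose_mat S = S" using psd_S unfolding psd_mat_def sym_mat_def by auto
  have "det S \<noteq> 0"
  proof
    assume "det S = 0"
    then obtain v where v: "v \<in> carrier_vec n" "v \<noteq> 0\<^sub>v n" "S *\<^sub>v v = 0\<^sub>v n"
      using det_0_iff_vec_prod_zero[OF S(1)] by auto
    have "A *\<^sub>v v = S *\<^sub>v (S *\<^sub>v v)" unfolding SS[symmetric] using S v by simp
    also have "\<dots> = 0\<^sub>v n" unfolding v(3) using S by (intro eq_vecI) auto
    finally have "v \<bullet> (A *\<^sub>v v) = 0" using v by simp
    thus False using pd v unfolding pd_mat_def by auto
  qed
  then obtain Si where Si: "Si \<in> carrier_mat n n" "S * Si = 1\<^sub>m n" "Si * S = 1\<^sub>m n"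
    using det_non_zero_imp_unit[OF S(1)] unfolding Units_def by (auto simp: ring_mat_simps)
  have inv: "inv_mat n S = Si" by (rule inv_mat_eqI[OF S(1) Si])
  have "S * transpose_mat Si = transpose_mat (Si * S)" "transpose_mat Si * S = transpose_mat (S * Si)"
    using S Si(1) by (simp_all add: transpose_mult[of Si n n S n] transpose_mult[of S n n Si n])
  hence "S * transpose_mat Si = 1\<^sub>m n" "transpose_mat Si * S = 1\<^sub>m n" using Si(2,3) by simp_all
  hence "inv_mat n S = transpose_mat Si" by (intro inv_mat_eqI) (use S Si in simp_all)
  thus "inv_mat n S \<in> carrier_mat n n" "S * inv_mat n S = 1\<^sub>m n" "inv_mat n S * S = 1\<^sub>m n"
    "transpose_mat (inv_mat n S) = inv_mat n S"
    using inv Si by auto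
qed

lemma Pmat_mult_append_vec:
  assumes Sig: "Sig \<in> carrier_mat d d" and v1: "v1 \<in> carrier_vec p" and v2: "v2 \<in> carrier_vec d"
  shows "Pmat p d Sig *\<^sub>v (v1 @\<^sub>v v2) = v1 @\<^sub>v (Sig *\<^sub>v v2)"
proof -
  have "Pmat p d Sig *\<^sub>v (v1 @\<^sub>v v2) = (1\<^sub>m p *\<^sub>v v1 + 0\<^sub>m p d *\<^sub>v v2) @\<^sub>v (0\<^sub>m d p *\<^sub>v v1 + Sig *\<^sub>v v2)"
    unfolding Pmat_def by (rule four_block_mat_mult_vec) (use Sig v1 v2 in auto)
  also have "1\<^sub>m p *\<^sub>v v1 + 0\<^sub>m p d *\<^sub>v v2 = v1" using v1 v2 by (intro eq_vecI) auto
  also have "0\<^sub>m d p *\<^sub>v v1 + Sig *\<^sub>v v2 = Sig *\<^sub>v v2" using v1 v2 Sig by (intro eq_vecI) auto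
  finally show ?thesis .
qed

lemma Pmat_quad_form:
  assumes Sig: "Sig \<in> carrier_mat d d" and v1: "v1 \<in> carrier_vec p" and v2: "v2 \<in> carrier_vec d"
  shows "(v1 @\<^sub>v v2) \<bullet> (Pmat p d Sig *\<^sub>v (v1 @\<^sub>v v2)) = v1 \<bullet> v1 + v2 \<bullet> (Sig *\<^sub>v v2)"
  unfolding Pmat_mult_append_vec[OF Sig v1 v2] by (rule scalar_prod_append) (use Sig v1 v2 in auto)

lemma psd_Pmat:
  assumes psd: "psd_mat d Sig"
  shows "psd_mat (p + d) (Pmat p d Sig)"
proof -
  have Sig: "Sig \<in> carrier_mat d d" "transpose_mat Sig = Sig"
    using psd unfolding psd_mat_def sym_mat_def by auto
  have "0 \<le> v \<bullet> (Pmat p d Sig *\<^sub>v v)" if v: "v \<in> carrier_vec (p + d)" for v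
  proof -
    have v_eq: "v = vec_first v p @\<^sub>v vec_last v d" using v by simp
    have "v \<bullet> (Pmat p d Sig *\<^sub>v v) = vec_first v p \<bullet> vec_first v p + vec_last v d \<bullet> (Sig *\<^sub>v vec_last v d)"
      by (subst (1 2) v_eq, rule Pmat_quad_form[OF Sig(1)]) auto
    thus ?thesis using psd scalar_prod_self_ge_0[of "vec_first v p"] unfolding psd_mat_def by fastforce
  qed
  moreover have "transpose_mat (Pmat p d Sig) = Pmat p d Sig"
    unfolding Pmat_def using Sig by (subst transpose_four_block_mat) auto
  ultimately show ?thesis using Sig unfolding psd_mat_def sym_mat_def Pmat_def by auto
qed

lemma scalar_prod_mat_sqrt:
  assumes psd: "psd_mat n P" and y: "y \<in> carrier_vec n"
  shows "(mat_sqrt n P *\<^sub>v y) \<bullet> (mat_sqrt n P *\<^sub>v y) = y \<bullet> (P *\<^sub>v y)"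
proof -
  let ?R = "mat_sqrt n P"
  have R: "?R \<in> carrier_mat n n" "transpose_mat ?R = ?R" "?R * ?R = P"
    using mat_sqrt_psd[OF psd] unfolding psd_mat_def sym_mat_def by auto
  have "(?R *\<^sub>v y) \<bullet> (?R *\<^sub>v y) = y \<bullet> (?R *\<^sub>v (?R *\<^sub>v y))"
    by (rule scalar_prod_sym_mat[OF R(1,2) y]) (use R y in simp)
  also have "?R *\<^sub>v (?R *\<^sub>v y) = P *\<^sub>v y" using R y by (simp flip: assoc_mult_mat_vec)
  finally show ?thesis .
qed

lemma append_rows_mult_mat:
  fixes A B C :: "real mat"
  assumes A: "A \<in> carrier_mat n1 k" and B: "B \<in> carrier_mat n2 k" and C: "C \<in> carrier_mat k m"
  shows "(A @\<^sub>r B) * C = (A * C) @\<^sub>r (B * C)"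
proof (rule eq_matI)
  fix i j assume "i < dim_row ((A * C) @\<^sub>r (B * C))" "j < dim_col ((A * C) @\<^sub>r (B * C))"
  hence i: "i < n1 + n2" and j: "j < m" using A B C by (auto simp: append_rows_def)
  have "row (A @\<^sub>r B) i = (if i < n1 then row A i else row B (i - n1))"
    by (rule eq_vecI) (use A B i in \<open>auto simp: append_rows_def\<close>)
  thus "((A @\<^sub>r B) * C) $$ (i, j) = ((A * C) @\<^sub>r (B * C)) $$ (i, j)"
    using i j A B C by (auto simp: append_rows_def)
qed (use A B C in \<open>auto simp: append_rows_def\<close>)

lemma transpose_congruence:
  fixes Q Z :: "real mat"
  assumes Q: "Q \<in> carrier_mat m n" and Z: "Z \<in> carrier_mat n n" and sym: "transpose_mat Z = Z"
  shows "transpose_mat (Q * Z * transpose_mat Q) = Q * Z * transpose_mat Q"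
  using Q Z sym
  by (simp add: transpose_mult[of Z n n "transpose_mat Q" m] transpose_mult[of Q m n "Z * transpose_mat Q" m])

section \<open>Projections onto \<open>\<S>\<close>\<close>

locale scaled_svd =
  fixes p d :: nat and Sig M U Gam V :: "real mat"
  assumes d_pos: "0 < d" and Sig_pd: "pd_mat d Sig" and M_dim: "M \<in> carrier_mat p d"
    and U_dim: "U \<in> carrier_mat p d" and V_dim: "V \<in> carrier_mat d d"
    and Gam_dim: "Gam \<in> carrier_mat d d"
    and U_orth: "transpose_mat U * U = 1\<^sub>m d" and V_orth: "transpose_mat V * V = 1\<^sub>m d"
    and Gam_diag: "diagonal_mat Gam" and Gam_pos: "\<forall>i<d. Gam $$ (i, i) > 0"
    and svd: "M * mat_sqrt d Sig = U * Gam * transpose_mat V"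
begin

abbreviation "S \<equiv> mat_sqrt d Sig"
abbreviation "S_inv \<equiv> inv_mat d S"
abbreviation "G \<equiv> mat_sqrt d Gam"
abbreviation "C \<equiv> (U * G) @\<^sub>r (S_inv * V * G)"
abbreviation "P \<equiv> Pmat p d Sig"

lemma Sig: "Sig \<in> carrier_mat d d" "transpose_mat Sig = Sig" "psd_mat d Sig"
  using Sig_pd psd_if_pd_mat[OF Sig_pd] unfolding pd_mat_def sym_mat_def by auto

lemma S: "S \<in> carrier_mat d d" "transpose_mat S = S" "S * S = Sig"
  using mat_sqrt_psd[OF Sig(3)] unfolding psd_mat_def sym_mat_def by auto

lemma S_inv: "S_inv \<in> carrier_mat d d" "transpose_mat S_inv = S_inv" "S * S_inv = 1\<^sub>m d" "S_inv * S = 1\<^sub>m d"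
  using pd_mat_sqrt_inverse[OF Sig_pd] by auto

lemma S_inv_Sig: "S_inv * Sig = S"
proof -
  have "S_inv * Sig = S_inv * (S * S)" using S(3) by simp
  also have "\<dots> = (S_inv * S) * S" by (rule assoc_mult_mat[symmetric, OF S_inv(1) S(1) S(1)])
  finally show ?thesis using S_inv(4) S(1) by simp
qed

lemma G: "G \<in> carrier_mat d d" "transpose_mat G = G" "G * G = Gam"
proof -
  have "transpose_mat Gam = Gam"
    using Gam_diag Gam_dim unfolding diagonal_mat_def by (intro eq_matI) (auto, metis)
  moreover have "0 \<le> v \<bullet> (Gam *\<^sub>v v)" if "v \<in> carrier_vec d" for v
    using quad_form_diagonal_mat_lower_bound[OF Gam_dim Gam_diag that, of 0] Gam_pos by fastforce
  ultimately have "psd_mat d Gam" using Gam_dim unfolding psd_mat_def sym_mat_def by blast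
  thus "G \<in> carrier_mat d d" "transpose_mat G = G" "G * G = Gam"
    using mat_sqrt_psd unfolding psd_mat_def sym_mat_def by auto
qed

lemma C: "C \<in> carrier_mat (p + d) d"
  using U_dim G S_inv V_dim by (intro carrier_append_rows) auto

lemma Sset_eq: "Sset d Sig U Gam V = {C * (transpose_mat J * S_inv) | J. J \<in> carrier_mat d d \<and> transpose_mat J * J = 1\<^sub>m d}"
proof -
  have eq: "(U * G * transpose_mat J * S_inv) @\<^sub>r (S_inv * V * G * transpose_mat J * S_inv) = C * (transpose_mat J * S_inv)"
    if J: "J \<in> carrier_mat d d" for J
    using append_rows_mult_mat[of "U * G" p d "S_inv * V * G" d "transpose_mat J * S_inv" d] U_dim G S_inv V_dim J
      carrier_matD[OF U_dim] carrier_matD[OF G(1)] carrier_matD[OF S_inv(1)] carrier_matD[OF V_dim] carrier_matD[OF J]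
    by (simp add: mult_mat_dim_simps)
  show ?thesis unfolding Sset_def Let_def setcompr_eq_image
    by (intro image_cong) (auto simp: eq)
qed

lemma P: "P \<in> carrier_mat (p + d) (p + d)" "transpose_mat P = P" "psd_mat (p + d) P"
  using psd_Pmat[OF Sig(3)] unfolding psd_mat_def sym_mat_def by auto

lemma rotated_mem_Sset:
  assumes J: "J \<in> carrier_mat d d" "transpose_mat J * J = 1\<^sub>m d"
    and R: "R \<in> carrier_mat d d" "R * transpose_mat R = 1\<^sub>m d"
  shows "C * (R * (transpose_mat J * S_inv)) \<in> Sset d Sig U Gam V"
proof -
  define J' where "J' = J * transpose_mat R"
  have J': "J' \<in> carrier_mat d d" using J R by (simp add: J'_def)
  have tJ': "transpose_mat J' = R * transpose_mat J"
    unfolding J'_def using J R by (simp add: transpose_mult[of J d d _ d])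
  have "transpose_mat J' * J' = R * (transpose_mat J * J) * transpose_mat R"
    unfolding tJ' unfolding J'_def using carrier_matD[OF J(1)] carrier_matD[OF R(1)]
    by (simp add: mult_mat_dim_simps)
  hence "transpose_mat J' * J' = 1\<^sub>m d" using J R by simp
  moreover have "R * (transpose_mat J * S_inv) = transpose_mat J' * S_inv"
    unfolding tJ' using J R S_inv by (simp add: assoc_mult_mat[of R d d _ d _ d])
  ultimately show ?thesis unfolding Sset_eq using J' by auto
qed

lemma Sset_factor_congruence:
  assumes J: "J \<in> carrier_mat d d" "transpose_mat J * J = 1\<^sub>m d" and Y: "Y \<in> carrier_mat d d"
  shows "Y * (transpose_mat J * S_inv) * Sig
    = (S * J) * ((transpose_mat J * S_inv) * Y) * transpose_mat (S * J)"
proof -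
  have JJt: "J * transpose_mat J = 1\<^sub>m d" using mat_mult_left_right_inverse[OF _ J(1) J(2)] J by simp
  note dims = carrier_matD[OF J(1)] carrier_matD[OF Y] carrier_matD[OF S(1)] carrier_matD[OF S_inv(1)]
  have "(S * J) * ((transpose_mat J * S_inv) * Y) * transpose_mat (S * J)
      = S * (J * transpose_mat J) * S_inv * Y * transpose_mat J * S"
    using dims S(1,2) J(1) by (simp add: transpose_mult[of S d d J d] mult_mat_dim_simps)
  also have "\<dots> = Y * transpose_mat J * S"
    unfolding JJt using dims S_inv(3) by (simp add: mult_mat_dim_simps flip: assoc_mult_mat_dim[of S S_inv])
  also have "\<dots> = Y * (transpose_mat J * (S_inv * Sig))"
    unfolding S_inv_Sig using dims by (simp add: mult_mat_dim_simps)
  also have "\<dots> = Y * (transpose_mat J * S_inv) * Sig"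
    using dims carrier_matD[OF Sig(1)] by (simp add: mult_mat_dim_simps)
  finally show ?thesis ..
qed

lemma projection_residual_sym:
  assumes T: "T \<in> carrier_mat (p + d) d" and th: "th \<in> Sset d Sig U Gam V"
    and min: "\<forall>s \<in> Sset d Sig U Gam V. Pnorm P (T - th) \<le> Pnorm P (T - s)"
  shows "sym_mat (transpose_mat (T - th) * P * th * Sig)"
proof -
  obtain J where J: "J \<in> carrier_mat d d" "transpose_mat J * J = 1\<^sub>m d"
    and th_eq: "th = C * (transpose_mat J * S_inv)"
    using th unfolding Sset_eq by blast
  define N where "N = transpose_mat J * S_inv"
  have N: "N \<in> carrier_mat d d" using J S_inv by (simp add: N_def)
  define Z where "Z = N * transpose_mat (T - th) * P * C"
  have "transpose_mat Z = Z"
    unfolding Z_def th_eq N_def[symmetric]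
  proof (rule orthogonal_stationarity_sym[OF C N P(1,2) T])
    fix R :: "real mat" assume "R \<in> carrier_mat d d" "R * transpose_mat R = 1\<^sub>m d"
    hence "Pnorm P (T - C * N) \<le> Pnorm P (T - C * (R * N))"
      using min rotated_mem_Sset[OF J] unfolding th_eq N_def by blast
    thus "trace_form P (T - C * N) (T - C * N) \<le> trace_form P (T - C * (R * N)) (T - C * (R * N))"
      unfolding Pnorm_eq_sqrt_trace_form by simp
  qed
  have th_c: "th \<in> carrier_mat (p + d) d" using th_eq C N unfolding N_def[symmetric] by simp
  have Y: "transpose_mat (T - th) * P * C \<in> carrier_mat d d"
    using T th_eq N C P(1) unfolding N_def[symmetric] by (meson minus_carrier_mat mult_carrier_mat transpose_carrier_mat)
  have "transpose_mat (T - th) * P * th * Sig = transpose_mat (T - th) * P * C * N * Sig"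
    unfolding th_eq N_def[symmetric] using carrier_matD[OF C] carrier_matD[OF N] carrier_matD[OF P(1)] T
    by (simp add: mult_mat_dim_simps)
  also have "\<dots> = (S * J) * (N * (transpose_mat (T - th) * P * C)) * transpose_mat (S * J)"
    unfolding N_def by (rule Sset_factor_congruence[OF J Y])
  also have NY: "N * (transpose_mat (T - th) * P * C) = Z"
    unfolding Z_def using carrier_matD[OF N] carrier_matD[OF th_c] carrier_matD[OF C] carrier_matD[OF P(1)]
    by (simp add: mult_mat_dim_simps)
  finally have "transpose_mat (T - th) * P * th * Sig = (S * J) * Z * transpose_mat (S * J)" .
  moreover have "Z \<in> carrier_mat d d" using NY N Y by (metis mult_carrier_mat)
  ultimately show ?thesis
    unfolding sym_mat_def using transpose_congruence[OF mult_carrier_mat[OF S(1) J(1)]] \<open>transpose_mat Z = Z\<close>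
    by simp
qed

text \<open>The two blocks of \<open>C z\<close> contribute \<open>|U G z|\<^sup>2\<close> and \<open>|V G z|\<^sup>2\<close>, both equal to \<open>z\<^sup>T \<Gamma> z\<close>.\<close>

lemma quad_form_P_C:
  assumes z: "z \<in> carrier_vec d"
  shows "(C *\<^sub>v z) \<bullet> (P *\<^sub>v (C *\<^sub>v z)) = 2 * (z \<bullet> (Gam *\<^sub>v z))"
proof -
  define g where "g = G *\<^sub>v z"
  define h where "h = V *\<^sub>v g"
  have g: "g \<in> carrier_vec d" and h: "h \<in> carrier_vec d" using G V_dim z by (simp_all add: g_def h_def)
  have Cz: "C *\<^sub>v z = (U *\<^sub>v g) @\<^sub>v (S_inv *\<^sub>v h)"
    using U_dim G S_inv V_dim z
    by (subst mat_mult_append[of _ p d _ d]) (auto simp: g_def h_def assoc_mult_mat_vec[of _ _ d _ d])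
  have "(C *\<^sub>v z) \<bullet> (P *\<^sub>v (C *\<^sub>v z)) = (U *\<^sub>v g) \<bullet> (U *\<^sub>v g) + (S_inv *\<^sub>v h) \<bullet> (Sig *\<^sub>v (S_inv *\<^sub>v h))"
    unfolding Cz by (rule Pmat_quad_form) (use Sig U_dim g S_inv h in auto)
  also have "(U *\<^sub>v g) \<bullet> (U *\<^sub>v g) = g \<bullet> g" by (rule scalar_prod_isometry[OF U_dim U_orth g])
  also have "(S_inv *\<^sub>v h) \<bullet> (Sig *\<^sub>v (S_inv *\<^sub>v h)) = h \<bullet> (S_inv *\<^sub>v (Sig *\<^sub>v (S_inv *\<^sub>v h)))"
    using scalar_prod_sym_mat[OF S_inv(1,2) h, of "Sig *\<^sub>v (S_inv *\<^sub>v h)"] Sig(1) S_inv(1) h by simp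
  also have "S_inv *\<^sub>v (Sig *\<^sub>v (S_inv *\<^sub>v h)) = S *\<^sub>v (S_inv *\<^sub>v h)"
    using assoc_mult_mat_vec[OF S_inv(1) Sig(1), of "S_inv *\<^sub>v h"] S_inv_Sig S_inv(1) h by simp
  also have "S *\<^sub>v (S_inv *\<^sub>v h) = h"
    using assoc_mult_mat_vec[OF S(1) S_inv(1) h] S_inv(3) h by simp
  also have "h \<bullet> h = g \<bullet> g"
    unfolding h_def by (rule scalar_prod_isometry[OF V_dim V_orth g])
  also have "g \<bullet> g = z \<bullet> (G *\<^sub>v (G *\<^sub>v z))"
    using scalar_prod_sym_mat[OF G(1,2) z, of g] G z by (simp add: g_def)
  also have "G *\<^sub>v (G *\<^sub>v z) = Gam *\<^sub>v z"
    using G(1) z by (simp add: G(3) flip: assoc_mult_mat_vec)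
  finally show ?thesis by simp
qed

lemma Sset_norm_identity:
  assumes J: "J \<in> carrier_mat d d" "transpose_mat J * J = 1\<^sub>m d" and w: "w \<in> carrier_vec d"
  defines "X \<equiv> mat_sqrt (p + d) P * (C * (transpose_mat J * S_inv)) * Sig"
    and "z \<equiv> transpose_mat J *\<^sub>v (S *\<^sub>v w)"
  shows "(X *\<^sub>v w) \<bullet> (X *\<^sub>v w) = 2 * (z \<bullet> (Gam *\<^sub>v z))" and "z \<bullet> z = w \<bullet> (Sig *\<^sub>v w)"
proof -
  have z: "z \<in> carrier_vec d" using J S w by (simp add: z_def)
  have "S_inv *\<^sub>v (Sig *\<^sub>v w) = S *\<^sub>v w"
    using S_inv(1) Sig(1) w by (simp add: S_inv_Sig flip: assoc_mult_mat_vec)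
  hence "transpose_mat J *\<^sub>v (S_inv *\<^sub>v (Sig *\<^sub>v w)) = z" by (simp add: z_def)
  moreover have "mat_sqrt (p + d) P \<in> carrier_mat (p + d) (p + d)"
    using mat_sqrt_psd(1)[OF P(3)] unfolding psd_mat_def by simp
  hence "X *\<^sub>v w = mat_sqrt (p + d) P *\<^sub>v (C *\<^sub>v (transpose_mat J *\<^sub>v (S_inv *\<^sub>v (Sig *\<^sub>v w))))"
    unfolding X_def using carrier_matD[OF C] carrier_matD[OF J(1)] carrier_matD[OF S_inv(1)]
      carrier_matD[OF Sig(1)] carrier_vecD[OF w] by (simp add: mult_mat_dim_simps carrier_matD)
  ultimately have "X *\<^sub>v w = mat_sqrt (p + d) P *\<^sub>v (C *\<^sub>v z)" by simp
  thus "(X *\<^sub>v w) \<bullet> (X *\<^sub>v w) = 2 * (z \<bullet> (Gam *\<^sub>v z))"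
    using scalar_prod_mat_sqrt[OF P(3)] quad_form_P_C[OF z] C z by simp
  have JJt: "J * transpose_mat J = 1\<^sub>m d" using mat_mult_left_right_inverse[OF _ J(1) J(2)] J by simp
  have "z \<bullet> z = (S *\<^sub>v w) \<bullet> (S *\<^sub>v w)"
    unfolding z_def by (rule scalar_prod_isometry) (use J JJt S w in auto)
  also have "\<dots> = w \<bullet> (S *\<^sub>v (S *\<^sub>v w))"
    using scalar_prod_sym_mat[OF S(1,2) w, of "S *\<^sub>v w"] S w by simp
  also have "S *\<^sub>v (S *\<^sub>v w) = Sig *\<^sub>v w"
    using S(1) w by (simp add: S(3) flip: assoc_mult_mat_vec)
  finally show "z \<bullet> z = w \<bullet> (Sig *\<^sub>v w)" .
qed

lemma Gam_diag_bounds: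
  assumes k: "k < d"
  shows "sigma (M * S) d \<le> Gam $$ (k, k) \<and> Gam $$ (k, k) \<le> sigma (M * S) 1"
  using sigma_bounds_svd_diagonal[OF U_dim Gam_dim V_dim U_orth V_orth Gam_diag svd k] Gam_pos k by auto

lemma Sset_norm_bounds:
  assumes th: "th \<in> Sset d Sig U Gam V" and w: "w \<in> carrier_vec d"
  defines "X \<equiv> mat_sqrt (p + d) P * th * Sig"
  shows "2 * sigma (M * S) d * sigma Sig d * (w \<bullet> w) \<le> (X *\<^sub>v w) \<bullet> (X *\<^sub>v w)"
    and "(X *\<^sub>v w) \<bullet> (X *\<^sub>v w) \<le> 2 * sigma (M * S) 1 * sigma Sig 1 * (w \<bullet> w)"
proof -
  obtain J where J: "J \<in> carrier_mat d d" "transpose_mat J * J = 1\<^sub>m d"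
    and th_eq: "th = C * (transpose_mat J * S_inv)"
    using th unfolding Sset_eq by blast
  define z where "z = transpose_mat J *\<^sub>v (S *\<^sub>v w)"
  have z: "z \<in> carrier_vec d" using J S w by (simp add: z_def)
  note norm = Sset_norm_identity[OF J w, folded th_eq X_def z_def]
  have MS: "M * S \<in> carrier_mat p d" using M_dim S(1) by simp
  note MS_nonneg = sigma_nonneg[OF MS d_pos]
  note Sig_bnd = psd_quad_form_sigma_bounds[OF Sig(3) d_pos w]
  have "2 * sigma (M * S) d * sigma Sig d * (w \<bullet> w) \<le> 2 * sigma (M * S) d * (w \<bullet> (Sig *\<^sub>v w))"
    using mult_left_mono[OF Sig_bnd(1) MS_nonneg(1)] by simp
  also have "\<dots> = 2 * (sigma (M * S) d * (z \<bullet> z))" using norm(2) by simp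
  also have "\<dots> \<le> 2 * (z \<bullet> (Gam *\<^sub>v z))"
    using quad_form_diagonal_mat_lower_bound[OF Gam_dim Gam_diag z] Gam_diag_bounds by simp
  finally show "2 * sigma (M * S) d * sigma Sig d * (w \<bullet> w) \<le> (X *\<^sub>v w) \<bullet> (X *\<^sub>v w)"
    using norm(1) by simp
  have "2 * (z \<bullet> (Gam *\<^sub>v z)) \<le> 2 * (sigma (M * S) 1 * (z \<bullet> z))"
    using quad_form_diagonal_mat_upper_bound[OF Gam_dim Gam_diag z] Gam_diag_bounds by simp
  also have "\<dots> = 2 * sigma (M * S) 1 * (w \<bullet> (Sig *\<^sub>v w))" using norm(2) by simp
  also have "\<dots> \<le> 2 * sigma (M * S) 1 * sigma Sig 1 * (w \<bullet> w)"
    using mult_left_mono[OF Sig_bnd(2) MS_nonneg(2)] by simp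
  finally show "(X *\<^sub>v w) \<bullet> (X *\<^sub>v w) \<le> 2 * sigma (M * S) 1 * sigma Sig 1 * (w \<bullet> w)"
    using norm(1) by simp
qed

lemma Sset_sigma_bounds:
  assumes th: "th \<in> Sset d Sig U Gam V"
  shows "2 * sigma (M * S) d * sigma Sig d \<le> (sigma (mat_sqrt (p + d) P * th * Sig) d)\<^sup>2"
    and "(sigma (mat_sqrt (p + d) P * th * Sig) 1)\<^sup>2 \<le> 2 * sigma (M * S) 1 * sigma Sig 1"
proof -
  obtain J where J: "J \<in> carrier_mat d d" and th_eq: "th = C * (transpose_mat J * S_inv)"
    using th unfolding Sset_eq by blast
  have "mat_sqrt (p + d) P \<in> carrier_mat (p + d) (p + d)"
    using mat_sqrt_psd(1)[OF P(3)] unfolding psd_mat_def by simp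
  hence X: "mat_sqrt (p + d) P * th * Sig \<in> carrier_mat (p + d) d"
    unfolding th_eq using C J S_inv(1) Sig(1) by (meson mult_carrier_mat transpose_carrier_mat)
  show "2 * sigma (M * S) d * sigma Sig d \<le> (sigma (mat_sqrt (p + d) P * th * Sig) d)\<^sup>2"
    by (rule sigma_sq_lower_bound[OF X d_pos Sset_norm_bounds(1)[OF th]])
  show "(sigma (mat_sqrt (p + d) P * th * Sig) 1)\<^sup>2 \<le> 2 * sigma (M * S) 1 * sigma Sig 1"
    by (rule sigma_sq_upper_bound[OF X d_pos Sset_norm_bounds(2)[OF th]])
qed

end

theorem lemma1:
  fixes p d :: nat and Sig M U Gam V A B th_star :: "real mat"
  assumes d_pos: "0 < d" and pd: "p \<ge> d"
    and Sig_pd: "pd_mat d Sig"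
    and M_dim: "M \<in> carrier_mat p d"
    and full_rank: "vec_space.rank p (M * mat_sqrt d Sig) = d"
    and U_dim: "U \<in> carrier_mat p d" and V_dim: "V \<in> carrier_mat d d"
    and Gam_dim: "Gam \<in> carrier_mat d d"
    and U_orth: "transpose_mat U * U = 1\<^sub>m d"
    and V_orth: "transpose_mat V * V = 1\<^sub>m d"
    and Gam_diag: "diagonal_mat Gam" and Gam_pos: "\<forall>i<d. Gam $$ (i, i) > 0"
    and svd: "M * mat_sqrt d Sig = U * Gam * transpose_mat V"
    and A_dim: "A \<in> carrier_mat p d" and B_dim: "B \<in> carrier_mat d d"
    and proj: "th_star \<in> Sset d Sig U Gam V"
              "\<forall>s \<in> Sset d Sig U Gam V.
                  Pnorm (Pmat p d Sig) ((A @\<^sub>r B) - th_star) \<le> Pnorm (Pmat p d Sig) ((A @\<^sub>r B) - s)"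
  shows "sym_mat (transpose_mat ((A @\<^sub>r B) - th_star) * Pmat p d Sig * th_star * Sig)
       \<and> 2 * sigma (M * mat_sqrt d Sig) d * sigma Sig d
           \<le> (sigma (mat_sqrt (p + d) (Pmat p d Sig) * th_star * Sig) d)\<^sup>2
       \<and> (sigma (mat_sqrt (p + d) (Pmat p d Sig) * th_star * Sig) 1)\<^sup>2
           \<le> 2 * sigma (M * mat_sqrt d Sig) 1 * sigma Sig 1"
proof -
  interpret scaled_svd p d Sig M U Gam V
    using d_pos Sig_pd M_dim U_dim V_dim Gam_dim U_orth V_orth Gam_diag Gam_pos svd by unfold_locales
  have "A @\<^sub>r B \<in> carrier_mat (p + d) d" using A_dim B_dim by simp
  thus ?thesis using projection_residual_sym[OF _ proj] Sset_sigma_bounds[OF proj(1)] by simp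
qed

end
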